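(* Let $\lambda_1\in\mathrm{Dyck}(2n_1)$, $\lambda_2\in\mathrm{Dyck}(2n_2)$, $\lambda=\lambda_1*\lambda_2$, let $a,b,i\ge0$ be integers, $\mu_1\in L(\lambda_1;a,i)$, $\mu_2\in L(\lambda_2;i,b)$ and $\mu=\mu_1*\mu_2$ (so $\mu\in L(\lambda;a,b)$). Then there is a bijection $\phi:\mathcal{TD}(\lambda/\mu)\to \mathcal{TD}(\lambda_1/\mu_1)\times\mathcal{TD}(\lambda_2/\mu_2)$ such that if $\phi(T)=(T_1,T_2)$ then $\|T\|=\|T_1\|+\|T_2\|$.
   Context: A Dyck path of length $2n$ is a lattice path from $(0,0)$ to $(n,n)$ with up steps $(0,1)$ and down steps $(1,0)$ never going below $y=x$; $\mathrm{Dyck}(2n)$ is their set. For lattice paths $\nu,\rho$, $\nu*\rho$ is the path obtained by translating $\rho$ so that its starting point is the endpoint of $\nu$ and concatenating. For $\lambda\in\mathrm{Dyck}(2n)$ and integers $a,b\ge0$, let $O=(0,0)$, $N=(n,n)$, $A=O+(-a,a)$, $B=N+(-b,b)$, and $L(\lambda;a,b)$ the set of lattice paths with steps $(0,1),(1,0)$ from $A$ to $B$ never going below $\lambda$. For $\mu\in L(\lambda;a,b)$, $\lambda/\mu$ is the region bounded by $\lambda$, $\mu$ and the segments $OA$, $NB$. A Dyck tile is an edge-connected set of unit cells with no $2\times2$ block whose cell centers, joined by unit up/right moves, form a translated Dyck path; its length is the length of that path. A truncated Dyck tile is obtained from a Dyck tile of positive length by cutting its northeast and southwest cells along their diagonals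 of slope $-1$ and removing the northeast half of the northeast cell and the southwest half of the southwest cell; its half-length is half the length of the original Dyck tile. A truncated Dyck tiling of $\lambda/\mu$ is a set $T$ of truncated Dyck tiles with disjoint interiors contained in $\lambda/\mu$ such that (i) for each $\eta\in T$, if $(\eta+(1,-1))\cap\lambda/\mu$ has nonempty interior then another tile of $T$ contains $\eta+(1,-1)$, and (ii) no two tiles share a border segment of slope $-1$. $\mathcal{TD}(\lambda/\mu)$ is their set; $\|T\|$ is the sum of the half-lengths of the tiles of $T$. *)

theory Defs
  imports Main
begin

text \<open>Lattice paths are lists of steps: True = up step (0,1), False = right step (1,0).
  Concatenation of paths (the operation *) is list append.\<close>

definition nups :: "bool list \<Rightarrow> nat" where
  "nups w = length (filter id w)"

definition nrights :: "bool list \<Rightarrow> nat" where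
  "nrights w = length (filter Not w)"

definition is_dyck :: "bool list \<Rightarrow> bool" where
  "is_dyck w \<longleftrightarrow> (\<forall>j\<le>length w. nrights (take j w) \<le> nups (take j w))
                  \<and> nups w = nrights w"

definition Dyck :: "nat \<Rightarrow> bool list set" where
  "Dyck m = {w. is_dyck w \<and> length w = m}"

text \<open>Height y - x after t steps of a path started on the line y = x.
  A path started at (-a,a) has height 2a + ht w t.  Points after t steps of any
  two paths started on the antidiagonal x + y = 0 lie on the same antidiagonal
  x + y = t, so "never going below" is the pointwise comparison of heights.\<close>
definition ht :: "bool list \<Rightarrow> nat \<Rightarrow> int" where
  "ht w t = int (nups (take t w)) - int (nrights (take t w))"

text \<open>L(lam; a, b): paths from A = (-a,a) to B = N + (-b,b) never below lam.\<close>
definition Lpaths :: "bool list \<Rightarrow> nat \<Rightarrow> nat \<Rightarrow> bool list set" where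
  "Lpaths lam a b = {mu. length mu = length lam
       \<and> 2 * int a + ht mu (length mu) = 2 * int b
       \<and> (\<forall>t\<le>length lam. ht lam t \<le> 2 * int a + ht mu t)}"

text \<open>Half-cells: ((x,y), False) is the south-west half and ((x,y), True) the north-east
  half of the unit cell [x,x+1] x [y,y+1], cut along its diagonal of slope -1.
  All regions and truncated tiles considered are unions of half-cells; a region is
  identified with the set of half-cells it contains (interiors disjoint iff half-cell sets
  disjoint).\<close>
type_synonym halfcell = "(int \<times> int) \<times> bool"

text \<open>The region lam/mu, where mu starts at (-a,a): a half-cell belongs to it iff it lies
  between lam and mu and between the antidiagonals x+y = 0 (segment OA) and
  x+y = length lam (segment NB).  A SW half of cell (x,y) spans the strip
  x+y <= s <= x+y+1, with apex at height h = y-x on the lower antidiagonal and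
  heights h-1..h+1 on the upper one; a NE half spans x+y+1 <= s <= x+y+2 the other way.\<close>
definition region :: "bool list \<Rightarrow> nat \<Rightarrow> bool list \<Rightarrow> halfcell set" where
  "region lam a mu = {((x,y),ne).
     (let t = x + y + (if ne then 1 else 0); h = y - x;
          L = (\<lambda>s. ht lam s); M = (\<lambda>s. 2 * int a + ht mu s) in
      0 \<le> t \<and> t < int (length lam) \<and>
      (if \<not> ne then L (nat t) \<le> h \<and> L (nat t + 1) \<le> h - 1 \<and> h \<le> M (nat t) \<and> h + 1 \<le> M (nat t + 1)
       else L (nat t) \<le> h - 1 \<and> L (nat t + 1) \<le> h \<and> h + 1 \<le> M (nat t) \<and> h \<le> M (nat t + 1)))}"

definition pcell :: "int \<times> int \<Rightarrow> bool list \<Rightarrow> nat \<Rightarrow> int \<times> int" where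
  "pcell c w j = (fst c + int (nrights (take j w)), snd c + int (nups (take j w)))"

text \<open>Dyck tile: set of cells whose centres form a translated Dyck path w starting at c
  (such a set is automatically edge-connected without 2x2 block).\<close>
definition dyck_tile :: "(int \<times> int) set \<Rightarrow> bool" where
  "dyck_tile D \<longleftrightarrow> (\<exists>c w. is_dyck w \<and> D = {pcell c w j | j. j \<le> length w})"

text \<open>Truncated Dyck tile from the Dyck tile with path w (positive length) starting at c:
  remove the SW half of the first (south-west) cell and the NE half of the last
  (north-east) cell.\<close>
definition trunc_tile :: "int \<times> int \<Rightarrow> bool list \<Rightarrow> halfcell set" where
  "trunc_tile c w = {(pcell c w j, False) | j. 1 \<le> j \<and> j \<le> length w}
                  \<union> {(pcell c w j, True) | j. j < length w}"

definition is_ttile_hl :: "halfcell set \<Rightarrow> nat \<Rightarrow> bool" where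
  "is_ttile_hl eta k \<longleftrightarrow> (\<exists>c w. is_dyck w \<and> length w = 2 * k \<and> 0 < k \<and> eta = trunc_tile c w)"

definition is_ttile :: "halfcell set \<Rightarrow> bool" where
  "is_ttile eta \<longleftrightarrow> (\<exists>k. is_ttile_hl eta k)"

definition half_length :: "halfcell set \<Rightarrow> nat" where
  "half_length eta = (THE k. is_ttile_hl eta k)"

definition shift_se :: "halfcell set \<Rightarrow> halfcell set" where
  "shift_se eta = (\<lambda>((x,y),ne). ((x + 1, y - 1), ne)) ` eta"

text \<open>The diagonal (slope -1) of cell c is a border segment of eta iff exactly one of the
  two halves of c belongs to eta.\<close>
definition diag_border :: "halfcell set \<Rightarrow> int \<times> int \<Rightarrow> bool" where
  "diag_border eta c \<longleftrightarrow> ((c, False) \<in> eta) \<noteq> ((c, True) \<in> eta)"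

definition TD :: "bool list \<Rightarrow> nat \<Rightarrow> bool list \<Rightarrow> halfcell set set set" where
  "TD lam a mu = {T.
      (\<forall>eta\<in>T. is_ttile eta \<and> eta \<subseteq> region lam a mu)
    \<and> (\<forall>eta\<in>T. \<forall>eta'\<in>T. eta \<noteq> eta' \<longrightarrow> eta \<inter> eta' = {})
    \<and> (\<forall>eta\<in>T. shift_se eta \<inter> region lam a mu \<noteq> {} \<longrightarrow>
          (\<exists>eta'\<in>T. eta' \<noteq> eta \<and> shift_se eta \<subseteq> eta'))
    \<and> (\<forall>eta\<in>T. \<forall>eta'\<in>T. eta \<noteq> eta' \<longrightarrow> \<not> (\<exists>c. diag_border eta c \<and> diag_border eta' c))}"

definition tnorm :: "halfcell set set \<Rightarrow> nat" where
  "tnorm T = (\<Sum>eta\<in>T. half_length eta)"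

end

theory Submission
  imports Defs
begin

text \<open>
  The antidiagonal through the end point of \<open>\<lambda>\<^sub>1\<close> (the cut) divides \<open>\<lambda>/\<mu>\<close> into a part
  below it, which is \<open>\<lambda>\<^sub>1/\<mu>\<^sub>1\<close>, and a part above it, which is \<open>\<lambda>\<^sub>2/\<mu>\<^sub>2\<close> translated
  by \<open>(n\<^sub>1,n\<^sub>1)\<close>.  The bijection cuts every tile along the cut.  The key fact is that a
  tile crossing the cut is cut exactly where its Dyck path returns to height 0: following
  the chain of tiles forced by condition (i) down to the bottom of the region, where \<open>\<lambda>\<close>
  touches the diagonal, shows that the half-cell of the tile on the cut is its lowest one.
  Hence both parts are truncated Dyck tiles, glued along the diagonal of a cell on the cut.
  Conversely, gluing the tiles of two tilings along the cut yields a tiling of \<open>\<lambda>/\<mu>\<close>.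
  Finally \<open>4\<parallel>T\<parallel>\<close> is the number of half-cells covered by \<open>T\<close>, which makes the norm additive.
\<close>

section \<open>Heights of lattice paths\<close>

lemma nups_Nil [simp]: "nups [] = 0" and nrights_Nil [simp]: "nrights [] = 0"
  by (simp_all add: nups_def nrights_def)

lemma nups_append: "nups (u @ v) = nups u + nups v"
  by (simp add: nups_def)

lemma nrights_append: "nrights (u @ v) = nrights u + nrights v"
  by (simp add: nrights_def)

lemma nups_plus_nrights: "nups w + nrights w = length w"
  by (induction w) (auto simp: nups_def nrights_def)

lemma ht_0 [simp]: "ht w 0 = 0"
  by (simp add: ht_def)

lemma ht_beyond: "length w \<le> t \<Longrightarrow> ht w t = ht w (length w)"
  by (simp add: ht_def)

lemma ht_take: "ht (take q w) t = ht w (min q t)"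
  by (simp add: ht_def min.commute)

lemma ht_add: "ht w (q + t) = ht w q + ht (drop q w) t"
  by (simp add: ht_def take_add nups_append nrights_append)

lemma ht_append: "ht (u @ v) t = (if t \<le> length u then ht u t else ht u (length u) + ht v (t - length u))"
  by (auto simp: ht_def nups_append nrights_append)

lemma ht_append_right: "ht (u @ v) (length u + s) = ht u (length u) + ht v s"
  using ht_add[of "u @ v" "length u" s] ht_append[of u v "length u"] by simp

lemma ht_Suc: "t < length w \<Longrightarrow> ht w (Suc t) = ht w t + (if w ! t then 1 else -1)"
  by (simp add: ht_def take_Suc_conv_app_nth nups_append nrights_append nups_def nrights_def)

lemma ht_step: "t < length w \<Longrightarrow> ht w (Suc t) = ht w t + 1 \<or> ht w (Suc t) = ht w t - 1"
  using ht_Suc[of t w] by auto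

lemma ht_Suc_bounds: "ht w t - 1 \<le> ht w (Suc t) \<and> ht w (Suc t) \<le> ht w t + 1"
proof (cases "t < length w")
  case True
  then show ?thesis by (simp add: ht_Suc)
next
  case False
  then show ?thesis using ht_beyond[of w t] ht_beyond[of w "Suc t"] by simp
qed

lemma ht_abs_le: "\<bar>ht w s\<bar> \<le> int (length w)"
proof -
  have "nups (take s w) + nrights (take s w) \<le> length w"
    using nups_plus_nrights[of "take s w"] by simp
  then show ?thesis unfolding ht_def by linarith
qed

lemma is_dyck_iff: "is_dyck w \<longleftrightarrow> (\<forall>t. 0 \<le> ht w t) \<and> ht w (length w) = 0"
proof
  assume d: "is_dyck w"
  have "0 \<le> ht w t" for t
    using d by (cases "t \<le> length w") (auto simp: is_dyck_def ht_def)
  moreover have "ht w (length w) = 0"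
    using d by (simp add: is_dyck_def ht_def)
  ultimately show "(\<forall>t. 0 \<le> ht w t) \<and> ht w (length w) = 0" by blast
next
  assume h: "(\<forall>t. 0 \<le> ht w t) \<and> ht w (length w) = 0"
  have "nrights (take j w) \<le> nups (take j w)" for j
    using h[THEN conjunct1, rule_format, of j] by (simp add: ht_def)
  moreover have "nups w = nrights w"
    using h by (simp add: ht_def)
  ultimately show "is_dyck w"
    unfolding is_dyck_def by blast
qed

lemma dyck_nonneg: "is_dyck w \<Longrightarrow> 0 \<le> ht w t"
  by (simp add: is_dyck_iff)

lemma dyck_end: "is_dyck w \<Longrightarrow> ht w (length w) = 0"
  by (simp add: is_dyck_iff)

lemma dyck_even: "is_dyck w \<Longrightarrow> even (length w)"
proof -
  assume "is_dyck w"
  then have "nups w = nrights w" by (simp add: is_dyck_def)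
  with nups_plus_nrights[of w] show ?thesis by presburger
qed

lemma dyck_take: "is_dyck w \<Longrightarrow> ht w q = 0 \<Longrightarrow> is_dyck (take q w)"
  unfolding is_dyck_iff by (auto simp: ht_take min_def)

lemma dyck_drop:
  assumes d: "is_dyck w" and h: "ht w q = 0"
  shows "is_dyck (drop q w)"
proof -
  have shifted: "ht (drop q w) t = ht w (q + t)" for t
    using ht_add[of w q t] h by simp
  have "ht w (q + length (drop q w)) = 0"
    using dyck_end[OF d] ht_beyond[of w q] h by (cases "q \<le> length w") auto
  then show ?thesis
    using d by (simp add: is_dyck_iff dyck_nonneg shifted)
qed

lemma dyck_append: "is_dyck u \<Longrightarrow> is_dyck v \<Longrightarrow> is_dyck (u @ v)"
  unfolding is_dyck_iff by (auto simp: ht_append)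

section \<open>Cells visited by a path of cell centres\<close>

lemma pcell_0 [simp]: "pcell c w 0 = c"
  by (simp add: pcell_def)

lemma pcell_sum: "fst (pcell c w j) + snd (pcell c w j) = fst c + snd c + int (min j (length w))"
  using nups_plus_nrights[of "take j w"] by (simp add: pcell_def)

lemma pcell_diff: "snd (pcell c w j) - fst (pcell c w j) = snd c - fst c + ht w j"
  by (simp add: pcell_def ht_def)

lemma pcell_inj:
  assumes "j \<le> length w" "j' \<le> length w" "pcell c w j = pcell c w j'"
  shows "j = j'"
proof -
  have "fst c + snd c + int (min j (length w)) = fst c + snd c + int (min j' (length w))"
    using pcell_sum[of c w j] pcell_sum[of c w j'] assms(3) by metis
  then show ?thesis using assms(1,2) by (simp add: min_absorb1)
qed

lemma pcell_transl:
  "pcell (fst c + dx, snd c + dy) w j = (fst (pcell c w j) + dx, snd (pcell c w j) + dy)"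
  by (simp add: pcell_def)

lemma pcell_append_left: "j \<le> length u \<Longrightarrow> pcell c (u @ v) j = pcell c u j"
  by (simp add: pcell_def)

lemma pcell_append_right: "pcell c (u @ v) (length u + k) = pcell (pcell c u (length u)) v k"
  by (simp add: pcell_def nups_append nrights_append)

section \<open>Coordinates of half-cells\<close>

text \<open>The level of a half-cell is the index of the strip between consecutive antidiagonals
  that contains it: the SW half of cell \<open>(x,y)\<close> lies in strip \<open>x+y\<close>, the NE half in strip
  \<open>x+y+1\<close>.  Within a strip, half-cells of the same orientation are told apart by their
  height \<open>y-x\<close>.\<close>
definition level :: "halfcell \<Rightarrow> int" where
  "level hc = fst (fst hc) + snd (fst hc) + (if snd hc then 1 else 0)"

definition height :: "halfcell \<Rightarrow> int" where
  "height hc = snd (fst hc) - fst (fst hc)"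

definition transl :: "int \<Rightarrow> int \<Rightarrow> halfcell \<Rightarrow> halfcell" where
  "transl dx dy hc = ((fst (fst hc) + dx, snd (fst hc) + dy), snd hc)"

text \<open>The south-east shift \<open>+(1,-1)\<close> of condition (i), and the diagonal translations
  \<open>+(d,d)\<close> that move the region of \<open>\<lambda>\<^sub>2/\<mu>\<^sub>2\<close> into place.\<close>
abbreviation se_shift :: "halfcell \<Rightarrow> halfcell" where
  "se_shift \<equiv> transl 1 (-1)"

abbreviation diag_transl :: "int \<Rightarrow> halfcell \<Rightarrow> halfcell" where
  "diag_transl d \<equiv> transl d d"

lemma level_transl [simp]: "level (transl dx dy hc) = level hc + dx + dy"
  by (simp add: level_def transl_def)

lemma height_transl [simp]: "height (transl dx dy hc) = height hc + dy - dx"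
  by (simp add: height_def transl_def)

lemma snd_transl [simp]: "snd (transl dx dy hc) = snd hc"
  by (simp add: transl_def)

lemma transl_transl [simp]: "transl dx dy (transl dx' dy' hc) = transl (dx + dx') (dy + dy') hc"
  by (simp add: transl_def add.assoc)

lemma transl_0 [simp]: "transl 0 0 hc = hc"
  by (simp add: transl_def)

lemma transl_pair: "transl dx dy (c, ne) = ((fst c + dx, snd c + dy), ne)"
  by (simp add: transl_def)

lemma inj_transl: "inj (transl dx dy)"
  by (rule injI) (auto simp: transl_def prod_eq_iff)

lemma shift_se_eq: "shift_se eta = se_shift ` eta"
  unfolding shift_se_def transl_def by (rule image_cong) auto

lemma diag_border_transl:
  "diag_border (transl dx dy ` eta) c \<longleftrightarrow> diag_border eta (fst c - dx, snd c - dy)"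
proof -
  have "(c, ne) \<in> transl dx dy ` eta \<longleftrightarrow> ((fst c - dx, snd c - dy), ne) \<in> eta" for ne
    by (force simp: transl_def image_iff)
  then show ?thesis by (simp add: diag_border_def)
qed

lemma se_shift_not_into_self:
  assumes "finite X" "X \<noteq> {}"
  shows "\<not> se_shift ` X \<subseteq> X"
proof
  assume into: "se_shift ` X \<subseteq> X"
  let ?x = "\<lambda>hc::halfcell. fst (fst hc)"
  have "finite (?x ` X)" "?x ` X \<noteq> {}" using assms by auto
  then obtain hc where hc: "hc \<in> X" "?x hc = Max (?x ` X)"
    by (metis (no_types, lifting) Max_in imageE)
  then have "?x (se_shift hc) \<le> Max (?x ` X)"
    using into assms(1) by (intro Max_ge) auto
  then show False using hc by (simp add: transl_def)
qed

section \<open>Truncated Dyck tiles\<close>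

lemma trunc_mem:
  "(p, ne) \<in> trunc_tile c w \<longleftrightarrow>
     (if ne then \<exists>j<length w. p = pcell c w j else \<exists>j. 1 \<le> j \<and> j \<le> length w \<and> p = pcell c w j)"
  by (auto simp: trunc_tile_def)

lemma trunc_tile_image:
  "trunc_tile c w = (\<lambda>j. (pcell c w j, False)) ` {1..length w} \<union> (\<lambda>j. (pcell c w j, True)) ` {..<length w}"
  unfolding trunc_tile_def by auto

lemma finite_trunc_tile [simp]: "finite (trunc_tile c w)"
  unfolding trunc_tile_image by simp

lemma card_trunc_tile: "card (trunc_tile c w) = 2 * length w"
proof -
  have "inj_on (\<lambda>j. (pcell c w j, False)) {1..length w}"
    by (rule inj_onI) (metis atLeastAtMost_iff pcell_inj prod.inject)
  moreover have "inj_on (\<lambda>j. (pcell c w j, True)) {..<length w}"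
    by (rule inj_onI) (metis lessThan_iff less_imp_le pcell_inj prod.inject)
  ultimately show ?thesis
    unfolding trunc_tile_image by (subst card_Un_disjoint) (auto simp: card_image)
qed

lemma trunc_tile_transl: "transl dx dy ` trunc_tile c w = trunc_tile (fst c + dx, snd c + dy) w"
  unfolding trunc_tile_image image_Un image_image by (simp add: transl_def pcell_transl)

lemma trunc_tile_start: "w \<noteq> [] \<Longrightarrow> (c, True) \<in> trunc_tile c w"
  by (auto simp: trunc_mem intro!: exI[of _ 0])

lemma trunc_tile_end: "w \<noteq> [] \<Longrightarrow> (pcell c w (length w), False) \<in> trunc_tile c w"
  by (auto simp: trunc_mem Suc_le_eq)

lemma level_pcell:
  "j \<le> length w \<Longrightarrow> level (pcell c w j, ne) = fst c + snd c + int j + (if ne then 1 else 0)"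
  using pcell_sum[of c w j] by (simp add: level_def min_absorb1)

lemma level_trunc_tile:
  assumes "hc \<in> trunc_tile c w"
  shows "fst c + snd c + 1 \<le> level hc \<and> level hc \<le> fst c + snd c + int (length w)"
  using assms unfolding trunc_tile_def by (auto simp: level_pcell)

lemma trunc_tile_level_unique:
  assumes "(p, ne) \<in> trunc_tile c w" "(p', ne) \<in> trunc_tile c w" "level (p, ne) = level (p', ne)"
  shows "p = p'"
  using assms unfolding trunc_tile_def by (auto simp: level_pcell)

text \<open>Concatenating the underlying paths concatenates the truncated tiles; this is how tiles
  are cut into two and glued back together.\<close>
lemma trunc_tile_append:
  "trunc_tile c (u @ v) = trunc_tile c u \<union> trunc_tile (pcell c u (length u)) v"
proof -
  let ?a = "length u" and ?b = "length v" and ?c' = "pcell c u (length u)"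
  have sw: "{1..?a + ?b} = {1..?a} \<union> plus ?a ` {1..?b}"
    by auto
  have ne: "{..<?a + ?b} = {..<?a} \<union> plus ?a ` {..<?b}"
    by (auto simp: lessThan_atLeast0)
  have left: "(\<lambda>j. (pcell c (u @ v) j, x)) ` {1..?a} = (\<lambda>j. (pcell c u j, x)) ` {1..?a}"
    "(\<lambda>j. (pcell c (u @ v) j, x)) ` {..<?a} = (\<lambda>j. (pcell c u j, x)) ` {..<?a}" for x :: bool
    by (auto simp: pcell_append_left intro!: image_cong)
  have right: "(\<lambda>j. (pcell c (u @ v) j, x)) ` plus ?a ` K = (\<lambda>k. (pcell ?c' v k, x)) ` K" for x :: bool and K
    by (simp add: image_image pcell_append_right)
  show ?thesis
    unfolding trunc_tile_image length_append sw ne image_Un left right by blast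
qed

lemma is_ttile_iff: "is_ttile eta \<longleftrightarrow> (\<exists>c w. is_dyck w \<and> w \<noteq> [] \<and> eta = trunc_tile c w)"
proof
  assume "is_ttile eta"
  then show "\<exists>c w. is_dyck w \<and> w \<noteq> [] \<and> eta = trunc_tile c w"
    by (fastforce simp: is_ttile_def is_ttile_hl_def)
next
  assume "\<exists>c w. is_dyck w \<and> w \<noteq> [] \<and> eta = trunc_tile c w"
  then obtain c w where cw: "is_dyck w" "w \<noteq> []" "eta = trunc_tile c w" by blast
  obtain k where k: "length w = 2 * k" using dyck_even[OF cw(1)] by (auto elim: evenE)
  then have "0 < k" using cw(2) by (cases k) auto
  then have "is_ttile_hl eta k" unfolding is_ttile_hl_def using cw k by blast
  then show "is_ttile eta" unfolding is_ttile_def by blast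
qed

lemma ttile_hl_card: "is_ttile_hl eta k \<Longrightarrow> card eta = 4 * k"
  unfolding is_ttile_hl_def using card_trunc_tile by auto

lemma half_length_card:
  assumes "is_ttile eta"
  shows "4 * half_length eta = card eta"
proof -
  obtain k where k: "is_ttile_hl eta k"
    using assms unfolding is_ttile_def by blast
  have "half_length eta = k"
    unfolding half_length_def
  proof (rule the_equality)
    show "is_ttile_hl eta k" by (rule k)
    show "k' = k" if "is_ttile_hl eta k'" for k'
      using ttile_hl_card[OF that] ttile_hl_card[OF k] by simp
  qed
  then show ?thesis
    using ttile_hl_card[OF k] by simp
qed

lemma ttile_finite: "is_ttile eta \<Longrightarrow> finite eta"
  unfolding is_ttile_iff by auto

lemma ttile_nonempty: "is_ttile eta \<Longrightarrow> eta \<noteq> {}"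
  unfolding is_ttile_iff using trunc_tile_start by blast

lemma ttile_transl: "is_ttile eta \<Longrightarrow> is_ttile (transl dx dy ` eta)"
  unfolding is_ttile_iff using trunc_tile_transl by metis

lemma ttile_level_unique:
  "is_ttile eta \<Longrightarrow> (p, ne) \<in> eta \<Longrightarrow> (p', ne) \<in> eta \<Longrightarrow> level (p, ne) = level (p', ne) \<Longrightarrow> p = p'"
  unfolding is_ttile_iff using trunc_tile_level_unique by blast

section \<open>Truncated Dyck tilings of an arbitrary set of half-cells\<close>

text \<open>The conditions defining \<open>\<T>\<D>(\<lambda>/\<mu>)\<close> make sense for any set \<open>R\<close> of half-cells; the
  regions below and above the cut are treated as such sets.\<close>
definition tilings :: "halfcell set \<Rightarrow> halfcell set set set" where
  "tilings R = {T. (\<forall>eta\<in>T. is_ttile eta \<and> eta \<subseteq> R)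
    \<and> (\<forall>eta\<in>T. \<forall>eta'\<in>T. eta \<noteq> eta' \<longrightarrow> eta \<inter> eta' = {})
    \<and> (\<forall>eta\<in>T. se_shift ` eta \<inter> R \<noteq> {} \<longrightarrow> (\<exists>eta'\<in>T. eta' \<noteq> eta \<and> se_shift ` eta \<subseteq> eta'))
    \<and> (\<forall>eta\<in>T. \<forall>eta'\<in>T. eta \<noteq> eta' \<longrightarrow> \<not> (\<exists>c. diag_border eta c \<and> diag_border eta' c))}"

lemma TD_eq_tilings: "TD lam a mu = tilings (region lam a mu)"
  unfolding TD_def tilings_def shift_se_eq ..

lemma tilingsI:
  assumes "\<And>eta. eta \<in> T \<Longrightarrow> is_ttile eta \<and> eta \<subseteq> R"
    and "\<And>eta eta'. eta \<in> T \<Longrightarrow> eta' \<in> T \<Longrightarrow> eta \<noteq> eta' \<Longrightarrow> eta \<inter> eta' = {}"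
    and "\<And>eta. eta \<in> T \<Longrightarrow> se_shift ` eta \<inter> R \<noteq> {} \<Longrightarrow> \<exists>eta'\<in>T. eta' \<noteq> eta \<and> se_shift ` eta \<subseteq> eta'"
    and "\<And>eta eta' c. eta \<in> T \<Longrightarrow> eta' \<in> T \<Longrightarrow> eta \<noteq> eta' \<Longrightarrow> diag_border eta c \<Longrightarrow> diag_border eta' c \<Longrightarrow> False"
  shows "T \<in> tilings R"
proof -
  have "\<forall>eta\<in>T. is_ttile eta \<and> eta \<subseteq> R"
    using assms(1) by blast
  moreover have "\<forall>eta\<in>T. \<forall>eta'\<in>T. eta \<noteq> eta' \<longrightarrow> eta \<inter> eta' = {}"
    using assms(2) by blast
  moreover have "\<forall>eta\<in>T. se_shift ` eta \<inter> R \<noteq> {} \<longrightarrow> (\<exists>eta'\<in>T. eta' \<noteq> eta \<and> se_shift ` eta \<subseteq> eta')"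
    using assms(3) by blast
  moreover have "\<forall>eta\<in>T. \<forall>eta'\<in>T. eta \<noteq> eta' \<longrightarrow> \<not> (\<exists>c. diag_border eta c \<and> diag_border eta' c)"
    using assms(4) by blast
  ultimately show ?thesis
    unfolding tilings_def by blast
qed

lemma tilings_tile: "T \<in> tilings R \<Longrightarrow> eta \<in> T \<Longrightarrow> is_ttile eta \<and> eta \<subseteq> R"
  by (simp add: tilings_def)

lemma tilings_disjoint:
  assumes "T \<in> tilings R" "eta \<in> T" "eta' \<in> T" "eta \<noteq> eta'"
  shows "eta \<inter> eta' = {}"
proof -
  have "\<forall>eta\<in>T. \<forall>eta'\<in>T. eta \<noteq> eta' \<longrightarrow> eta \<inter> eta' = {}"
    using assms(1) unfolding tilings_def mem_Collect_eq by (elim conjE) assumption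
  then show ?thesis using assms(2-4) by blast
qed

lemma tilings_shift:
  assumes "T \<in> tilings R" "eta \<in> T" "se_shift ` eta \<inter> R \<noteq> {}"
  shows "\<exists>eta'\<in>T. eta' \<noteq> eta \<and> se_shift ` eta \<subseteq> eta'"
proof -
  have "\<forall>eta\<in>T. se_shift ` eta \<inter> R \<noteq> {} \<longrightarrow> (\<exists>eta'\<in>T. eta' \<noteq> eta \<and> se_shift ` eta \<subseteq> eta')"
    using assms(1) unfolding tilings_def mem_Collect_eq by (elim conjE) assumption
  then show ?thesis using assms(2,3) by blast
qed

lemma tilings_border:
  assumes "T \<in> tilings R" "eta \<in> T" "eta' \<in> T" "eta \<noteq> eta'" "diag_border eta c" "diag_border eta' c"
  shows False
proof -
  have "\<forall>eta\<in>T. \<forall>eta'\<in>T. eta \<noteq> eta' \<longrightarrow> \<not> (\<exists>c. diag_border eta c \<and> diag_border eta' c)"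
    using assms(1) unfolding tilings_def mem_Collect_eq by (elim conjE) assumption
  then show False using assms(2-6) by blast
qed

lemma tilings_halves_same_tile:
  assumes "T \<in> tilings R" "eta \<in> T" "eta' \<in> T" "(c, False) \<in> eta" "(c, True) \<in> eta'"
  shows "eta = eta'"
proof (rule ccontr)
  assume ne: "eta \<noteq> eta'"
  then have "eta \<inter> eta' = {}" using tilings_disjoint assms(1-3) by blast
  then have "diag_border eta c" "diag_border eta' c"
    using assms(4,5) unfolding diag_border_def by blast+
  then show False using tilings_border[OF assms(1-3) ne] by blast
qed

text \<open>Tilings are invariant under translations, which commute with the south-east shift.\<close>
lemma tilings_transl:
  assumes T: "T \<in> tilings R"
  shows "(\<lambda>eta. transl dx dy ` eta) ` T \<in> tilings (transl dx dy ` R)"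
proof (rule tilingsI)
  let ?t = "transl dx dy"
  have inj: "inj ?t" by (rule inj_transl)
  have comm: "se_shift ` ?t ` X = ?t ` se_shift ` X" for X
    by (simp add: image_image add.commute)
  fix eta assume "eta \<in> (\<lambda>eta. ?t ` eta) ` T"
  then obtain x where x: "x \<in> T" "eta = ?t ` x" by blast
  show "is_ttile eta \<and> eta \<subseteq> ?t ` R"
    using tilings_tile[OF T x(1)] x(2) ttile_transl by blast
  {
    fix eta' assume "eta' \<in> (\<lambda>eta. ?t ` eta) ` T" "eta \<noteq> eta'"
    then obtain y where y: "y \<in> T" "eta' = ?t ` y" "x \<noteq> y" using x by blast
    show "eta \<inter> eta' = {}"
      unfolding x(2) y(2) image_Int[OF inj, symmetric] using tilings_disjoint[OF T x(1) y(1,3)] by simp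
    fix c assume "diag_border eta c" "diag_border eta' c"
    then show False
      using tilings_border[OF T x(1) y(1,3)] x(2) y(2) by (simp add: diag_border_transl)
  }
  assume "se_shift ` eta \<inter> ?t ` R \<noteq> {}"
  then have "se_shift ` x \<inter> R \<noteq> {}"
    unfolding x(2) comm image_Int[OF inj, symmetric] by blast
  then obtain y where y: "y \<in> T" "y \<noteq> x" "se_shift ` x \<subseteq> y"
    using tilings_shift[OF T x(1)] by blast
  have "?t ` y \<noteq> eta" using y(2) x(2) inj_image_eq_iff[OF inj] by metis
  moreover have "se_shift ` eta \<subseteq> ?t ` y" using y(3) unfolding x(2) comm by blast
  ultimately show "\<exists>eta'\<in>(\<lambda>eta. ?t ` eta) ` T. eta' \<noteq> eta \<and> se_shift ` eta \<subseteq> eta'"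
    using y(1) by blast
qed

definition pieces :: "halfcell set \<Rightarrow> halfcell set set \<Rightarrow> halfcell set set" where
  "pieces U T = {eta \<inter> U | eta. eta \<in> T \<and> eta \<inter> U \<noteq> {}}"

lemma pieces_mem: "P \<in> pieces U T \<longleftrightarrow> (\<exists>eta\<in>T. P = eta \<inter> U \<and> eta \<inter> U \<noteq> {})"
  unfolding pieces_def by blast

lemma Union_pieces: "\<Union>(pieces U T) = \<Union>T \<inter> U"
  unfolding pieces_def by blast

text \<open>Condition (i): the tile covering the shift of the
  original tile also covers the shifted piece, and its piece differs from the given one,
  since no finite set is shifted into itself.\<close>
lemma pieces_shift:
  assumes T: "T \<in> tilings R" and U: "se_shift ` U \<subseteq> U"
    and tiles: "\<And>eta. eta \<in> T \<Longrightarrow> eta \<inter> U \<noteq> {} \<Longrightarrow> is_ttile (eta \<inter> U)"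
    and P: "P \<in> pieces U T" "se_shift ` P \<inter> (R \<inter> U) \<noteq> {}"
  shows "\<exists>P'\<in>pieces U T. P' \<noteq> P \<and> se_shift ` P \<subseteq> P'"
proof -
  obtain x where x: "x \<in> T" "P = x \<inter> U" "x \<inter> U \<noteq> {}"
    using P(1) unfolding pieces_mem by blast
  have "se_shift ` P \<subseteq> se_shift ` x"
    unfolding x(2) by (rule image_mono) simp
  then have "se_shift ` x \<inter> R \<noteq> {}"
    using P(2) by blast
  then obtain y where y: "y \<in> T" "se_shift ` x \<subseteq> y"
    using tilings_shift[OF T x(1)] by blast
  have "se_shift ` P \<subseteq> se_shift ` U"
    unfolding x(2) by (rule image_mono) simp
  then have "se_shift ` P \<subseteq> U"
    using U by (rule order_trans)
  moreover have "se_shift ` P \<subseteq> y"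
    using \<open>se_shift ` P \<subseteq> se_shift ` x\<close> y(2) by (rule order_trans)
  ultimately have sub: "se_shift ` P \<subseteq> y \<inter> U"
    by (rule Int_greatest[rotated])
  have "finite P" "P \<noteq> {}"
    using ttile_finite[OF tiles[OF x(1,3)]] x(2,3) by simp_all
  then have "\<not> se_shift ` P \<subseteq> P"
    by (rule se_shift_not_into_self)
  then have "y \<inter> U \<noteq> P"
    using sub by auto
  moreover have "y \<inter> U \<in> pieces U T"
    using y(1) sub \<open>P \<noteq> {}\<close> unfolding pieces_mem by blast
  ultimately show ?thesis
    using sub by (intro bexI[of _ "y \<inter> U"] conjI)
qed

lemma diag_border_other_half: "diag_border X c \<Longrightarrow> (c, ne) \<notin> X \<Longrightarrow> (c, \<not> ne) \<in> X"
  by (cases ne) (auto simp: diag_border_def)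

text \<open>Condition (ii): a border shared by two pieces is shared by the tiles, unless \<open>U\<close> misses
  one half of the cell; then both pieces contain the other half, contradicting disjointness.\<close>
lemma pieces_border:
  assumes T: "T \<in> tilings R"
    and P: "P \<in> pieces U T" "P' \<in> pieces U T" "P \<noteq> P'"
    and c: "diag_border P c" "diag_border P' c"
  shows False
proof -
  obtain x y where xy: "x \<in> T" "y \<in> T" "P = x \<inter> U" "P' = y \<inter> U" "x \<noteq> y"
    using P unfolding pieces_mem by blast
  have dis: "x \<inter> y = {}"
    using tilings_disjoint[OF T xy(1,2,5)] .
  show False
  proof (cases "(c, False) \<in> U \<and> (c, True) \<in> U")
    case True
    then have "diag_border x c" "diag_border y c"
      using c unfolding xy(3,4) diag_border_def by auto
    then show False
      using tilings_border[OF T xy(1,2,5)] by blast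
  next
    case False
    then obtain ne where ne: "(c, ne) \<notin> U" by blast
    have "(c, \<not> ne) \<in> P" "(c, \<not> ne) \<in> P'"
      using diag_border_other_half[OF c(1)] diag_border_other_half[OF c(2)] ne
      unfolding xy(3,4) by auto
    then show False
      using dis unfolding xy(3,4) by blast
  qed
qed

lemma pieces_tiling:
  assumes T: "T \<in> tilings R" and U: "se_shift ` U \<subseteq> U"
    and tiles: "\<And>eta. eta \<in> T \<Longrightarrow> eta \<inter> U \<noteq> {} \<Longrightarrow> is_ttile (eta \<inter> U)"
  shows "pieces U T \<in> tilings (R \<inter> U)"
proof (rule tilingsI)
  fix P assume "P \<in> pieces U T"
  then obtain x where x: "x \<in> T" "P = x \<inter> U" "x \<inter> U \<noteq> {}"
    unfolding pieces_mem by blast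
  then show "is_ttile P \<and> P \<subseteq> R \<inter> U"
    using tiles[OF x(1,3)] tilings_tile[OF T x(1)] by blast
next
  fix P P' assume "P \<in> pieces U T" "P' \<in> pieces U T" "P \<noteq> P'"
  then obtain x y where "x \<in> T" "y \<in> T" "P = x \<inter> U" "P' = y \<inter> U" "x \<noteq> y"
    unfolding pieces_mem by blast
  then show "P \<inter> P' = {}"
    using tilings_disjoint[OF T] by blast
qed (use pieces_shift[OF T U tiles] pieces_border[OF T] in blast)+

text \<open>Since a tile of half-length \<open>k\<close> has \<open>4k\<close> half-cells, the norm of a tiling counts the
  half-cells it covers.\<close>
lemma tnorm_card:
  assumes T: "T \<in> tilings R"
  shows "4 * tnorm T = card (\<Union>T)"
proof -
  have tile: "eta \<in> T \<Longrightarrow> is_ttile eta" for eta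
    using tilings_tile[OF T] by blast
  have "4 * tnorm T = (\<Sum>eta\<in>T. 4 * half_length eta)"
    by (simp add: tnorm_def sum_distrib_left)
  also have "\<dots> = (\<Sum>eta\<in>T. card eta)"
    by (rule sum.cong) (simp_all add: half_length_card tile)
  also have "\<dots> = card (\<Union>T)"
  proof (rule card_Union_disjoint[symmetric])
    show "pairwise disjnt T"
      unfolding pairwise_def disjnt_def using tilings_disjoint[OF T] by blast
    show "finite eta" if "eta \<in> T" for eta
      using ttile_finite[OF tile[OF that]] .
  qed
  finally show ?thesis .
qed

text \<open>Translating every tile of a family diagonally by \<open>(d,d)\<close>; this moves tilings of
  \<open>\<lambda>\<^sub>2/\<mu>\<^sub>2\<close> into and out of position above the cut.\<close>
definition transl_tiling :: "int \<Rightarrow> halfcell set set \<Rightarrow> halfcell set set" where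
  "transl_tiling d Q = (\<lambda>eta. diag_transl d ` eta) ` Q"

lemma transl_tiling_inverse [simp]: "transl_tiling (- d) (transl_tiling d Q) = Q"
  by (simp add: transl_tiling_def image_image)

lemma transl_tiling_inverse' [simp]: "transl_tiling d (transl_tiling (- d) Q) = Q"
  by (simp add: transl_tiling_def image_image)

lemma Union_transl_tiling: "\<Union>(transl_tiling d Q) = diag_transl d ` \<Union>Q"
  by (simp add: transl_tiling_def image_Union)

text \<open>A half-cell of orientation \<open>ne\<close> at height \<open>h\<close> lies between a lower path with heights
  \<open>L0, L1\<close> and an upper path with heights \<open>M0, M1\<close> on the two antidiagonals bounding its strip.\<close>
definition between_paths :: "bool \<Rightarrow> int \<Rightarrow> int \<Rightarrow> int \<Rightarrow> int \<Rightarrow> int \<Rightarrow> bool" where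
  "between_paths ne L0 L1 M0 M1 h \<longleftrightarrow>
     (if \<not> ne then L0 \<le> h \<and> L1 \<le> h - 1 \<and> h \<le> M0 \<and> h + 1 \<le> M1
      else L0 \<le> h - 1 \<and> L1 \<le> h \<and> h + 1 \<le> M0 \<and> h \<le> M1)"

lemma region_iff:
  "hc \<in> region lam a mu \<longleftrightarrow> 0 \<le> level hc \<and> level hc < int (length lam) \<and>
     between_paths (snd hc) (ht lam (nat (level hc))) (ht lam (nat (level hc) + 1))
       (2 * int a + ht mu (nat (level hc))) (2 * int a + ht mu (nat (level hc) + 1)) (height hc)"
proof -
  obtain x y ne where hc: "hc = ((x, y), ne)" by (metis prod.collapse)
  have "nat (x + y + (if ne then 1 else 0)) + 1 = nat (x + y + (if ne then 1 else 0) + 1)"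
    if "0 \<le> x + y + (if ne then 1 else 0)"
    using that by simp
  then show ?thesis
    unfolding hc region_def between_paths_def level_def height_def Let_def by auto
qed

lemma region_finite: "finite (region lam a mu)"
proof -
  define B where "B = 2 * int a + int (length lam) + int (length mu) + 2"
  let ?f = "\<lambda>hc::halfcell. (level hc, height hc, snd hc)"
  have inj: "inj_on ?f (region lam a mu)"
  proof (rule inj_onI)
    fix x y :: halfcell
    assume "?f x = ?f y"
    then show "x = y" by (auto simp: level_def height_def prod_eq_iff split: if_splits)
  qed
  have "?f ` region lam a mu \<subseteq> {0..<int (length lam)} \<times> {-B..B} \<times> UNIV"
  proof
    fix z assume "z \<in> ?f ` region lam a mu"
    then obtain hc where hc: "hc \<in> region lam a mu" "z = ?f hc" by blast
    note r = hc(1)[unfolded region_iff]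
    have bounds: "\<bar>ht lam s\<bar> \<le> int (length lam)" "\<bar>ht mu s\<bar> \<le> int (length mu)" for s
      by (rule ht_abs_le)+
    have "- B \<le> height hc \<and> height hc \<le> B"
      using r bounds[of "nat (level hc)"] bounds[of "nat (level hc) + 1"]
      unfolding between_paths_def B_def by (auto split: if_splits simp: abs_le_iff)
    then show "z \<in> {0..<int (length lam)} \<times> {-B..B} \<times> UNIV" using r hc by auto
  qed
  then have "finite (?f ` region lam a mu)" by (rule finite_subset) auto
  then show ?thesis using finite_imageD inj by blast
qed

section \<open>The region of a concatenation\<close>

text \<open>The antidiagonal through the end point of \<open>\<lambda>\<^sub>1\<close>, between
  strips \<open>m-1\<close> and \<open>m\<close> where \<open>m = |\<lambda>\<^sub>1|\<close>, cuts the region \<open>\<lambda>/\<mu>\<close> into a part below the cut and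
  a part above it.\<close>
locale concat_setup =
  fixes lam1 lam2 mu1 mu2 :: "bool list" and n1 n2 a b i :: nat
  assumes lam1: "lam1 \<in> Dyck (2 * n1)" and lam2: "lam2 \<in> Dyck (2 * n2)"
    and mu1: "mu1 \<in> Lpaths lam1 a i" and mu2: "mu2 \<in> Lpaths lam2 i b"
begin

abbreviation "lam \<equiv> lam1 @ lam2"
abbreviation "mu \<equiv> mu1 @ mu2"
abbreviation "m \<equiv> length lam1"
abbreviation "Reg \<equiv> region lam a mu"
abbreviation "cut_below \<equiv> {hc. level hc < int m}"
abbreviation "cut_above \<equiv> {hc. \<not> level hc < int m}"

lemma dyck_lam1: "is_dyck lam1" using lam1 by (simp add: Dyck_def)
lemma dyck_lam2: "is_dyck lam2" using lam2 by (simp add: Dyck_def)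
lemma m_eq: "m = 2 * n1" using lam1 by (simp add: Dyck_def)
lemma length_mu1: "length mu1 = m" using mu1 by (simp add: Lpaths_def)
lemma mu1_end: "2 * int a + ht mu1 m = 2 * int i" using mu1 length_mu1 by (simp add: Lpaths_def)

lemma ht_lam_below: "s \<le> m \<Longrightarrow> ht lam s = ht lam1 s"
  by (simp add: ht_append)

lemma ht_mu_below: "s \<le> m \<Longrightarrow> ht mu s = ht mu1 s"
  using length_mu1 by (simp add: ht_append)

lemma ht_lam_above: "ht lam (m + s) = ht lam2 s"
  using ht_append_right[of lam1 lam2 s] dyck_end[OF dyck_lam1] by simp

lemma ht_mu_above: "2 * int a + ht mu (m + s) = 2 * int i + ht mu2 s"
  using ht_append_right[of mu1 mu2 s] mu1_end length_mu1 by simp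

lemma region_below: "Reg \<inter> cut_below = region lam1 a mu1"
proof (rule set_eqI)
  fix hc :: halfcell
  show "hc \<in> Reg \<inter> cut_below \<longleftrightarrow> hc \<in> region lam1 a mu1"
  proof (cases "0 \<le> level hc \<and> level hc < int m")
    case True
    then have "nat (level hc) + 1 \<le> m" by linarith
    then show ?thesis using True by (simp add: region_iff ht_lam_below ht_mu_below)
  qed (auto simp: region_iff)
qed

lemma region_above_iff: "hc \<in> Reg \<inter> cut_above \<longleftrightarrow> diag_transl (- int n1) hc \<in> region lam2 i mu2"
proof (cases "int m \<le> level hc")
  case True
  define s where "s = nat (level hc) - m"
  have lv: "level (diag_transl (- int n1) hc) = level hc - int m"
    using m_eq by simp
  have s: "nat (level hc) = m + s" "nat (level hc) + 1 = m + (s + 1)" "nat (level hc - int m) = s"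
    using True unfolding s_def by linarith+
  show ?thesis
    unfolding Int_iff mem_Collect_eq region_iff lv using True
    by (simp only: s add.assoc ht_lam_above ht_mu_above height_transl snd_transl) auto
next
  case False
  then show ?thesis unfolding region_iff using m_eq by simp
qed

lemma region_above: "Reg \<inter> cut_above = diag_transl (int n1) ` region lam2 i mu2"
proof (rule set_eqI)
  fix hc
  have "hc = diag_transl (int n1) (diag_transl (- int n1) hc)" by simp
  then show "hc \<in> Reg \<inter> cut_above \<longleftrightarrow> hc \<in> diag_transl (int n1) ` region lam2 i mu2"
    unfolding region_above_iff by force
qed

text \<open>Since \<open>\<lambda>\<close> never goes below the diagonal, the region lies strictly above it.\<close>
lemma region_height_pos: "hc \<in> Reg \<Longrightarrow> 1 \<le> height hc"
  using dyck_nonneg[OF dyck_append[OF dyck_lam1 dyck_lam2]]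
  unfolding region_iff between_paths_def by (auto split: if_splits) (smt (verit))+

section \<open>Tiles crossing the cut\<close>

lemma ht_lam_cut: "ht lam m = 0"
  using ht_lam_below[of m] dyck_end[OF dyck_lam1] by simp

lemma ht_lam_before_cut:
  assumes "1 \<le> m"
  shows "ht lam (m - 1) = 1"
proof -
  have "Suc (m - 1) = m" using assms by simp
  then have "ht lam1 m = ht lam1 (m - 1) + 1 \<or> ht lam1 m = ht lam1 (m - 1) - 1"
    using ht_step[of "m - 1" lam1] assms by simp
  then show ?thesis
    using ht_lam_below[of "m - 1"] dyck_end[OF dyck_lam1] dyck_nonneg[OF dyck_lam1, of "m - 1"] by auto
qed

lemma ht_lam_after_cut: "lam2 \<noteq> [] \<Longrightarrow> ht lam (m + 1) = 1"
  using ht_lam_above[of 1] ht_step[of 0 lam2] dyck_nonneg[OF dyck_lam2, of 1] by auto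

text \<open>Cells on the cut are those whose SW half lies in strip \<open>m-1\<close> and whose NE half lies in
  strip \<open>m\<close>.\<close>
definition on_cut :: "int \<times> int \<Rightarrow> bool" where
  "on_cut c \<longleftrightarrow> fst c + snd c = int m - 1"

lemma on_cut_levels: "on_cut c \<Longrightarrow> level (c, False) = int m - 1 \<and> level (c, True) = int m"
  by (simp add: on_cut_def level_def)

lemma on_cut_shift: "on_cut c \<Longrightarrow> on_cut (fst c + 1, snd c - 1)"
  by (simp add: on_cut_def)

lemma region_strip_before_cut:
  assumes F: "snd hc = False" and lv: "level hc = int m - 1" and m1: "1 \<le> m"
  shows "hc \<in> Reg \<longleftrightarrow>
    between_paths False 1 0 (2 * int a + ht mu (m - 1)) (2 * int a + ht mu m) (height hc)"
proof -
  have "nat (level hc) = m - 1" "Suc (m - 1) = m" "0 \<le> level hc" "level hc < int (length lam)"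
    using lv m1 by auto
  then show ?thesis
    unfolding region_iff using F ht_lam_cut ht_lam_before_cut[OF m1] by simp
qed

lemma region_strip_after_cut:
  assumes T: "snd hc = True" and lv: "level hc = int m"
  shows "hc \<in> Reg \<longleftrightarrow> lam2 \<noteq> [] \<and>
    between_paths True 0 (ht lam (Suc m)) (2 * int a + ht mu m) (2 * int a + ht mu (Suc m)) (height hc)"
proof -
  have "nat (level hc) = m" "0 \<le> level hc" "level hc < int (length lam) \<longleftrightarrow> lam2 \<noteq> []"
    using lv by auto
  then show ?thesis
    unfolding region_iff using T ht_lam_cut by simp
qed

lemma region_strip_after_cut_nonempty: "hc \<in> Reg \<Longrightarrow> level hc = int m \<Longrightarrow> lam2 \<noteq> []"
  unfolding region_iff by auto

lemma region_strip_before_cut_nonempty: "hc \<in> Reg \<Longrightarrow> level hc = int m - 1 \<Longrightarrow> 1 \<le> m"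
  unfolding region_iff by (auto simp: Suc_le_eq)

text \<open>In a cell on the cut, one half lies in \<open>\<lambda>/\<mu>\<close> as soon as the other one does (provided
  the relevant side of the cut is nonempty): the paths \<open>\<lambda>\<close> and \<open>\<mu>\<close> move by one unit
  per step.\<close>
lemma on_cut_NE_in_region:
  assumes c: "on_cut c" and F: "(c, False) \<in> Reg" and ne: "lam2 \<noteq> []"
  shows "(c, True) \<in> Reg"
proof -
  have lv: "level (c, False) = int m - 1" "level (c, True) = int m"
    using on_cut_levels[OF c] by auto
  have m1: "1 \<le> m" using region_strip_before_cut_nonempty[OF F lv(1)] .
  have "between_paths False 1 0 (2 * int a + ht mu (m - 1)) (2 * int a + ht mu m) (height (c, False))"
    using F region_strip_before_cut[OF _ lv(1) m1] by simp
  moreover have "ht mu m - 1 \<le> ht mu (Suc m)"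
    using ht_Suc_bounds[of mu m] by simp
  ultimately show ?thesis
    using region_strip_after_cut[OF _ lv(2)] ne ht_lam_after_cut[OF ne]
    by (simp add: between_paths_def height_def)
qed

lemma on_cut_SW_in_region:
  assumes c: "on_cut c" and T: "(c, True) \<in> Reg" and m1: "1 \<le> m"
  shows "(c, False) \<in> Reg"
proof -
  have lv: "level (c, False) = int m - 1" "level (c, True) = int m"
    using on_cut_levels[OF c] by auto
  have "between_paths True 0 (ht lam (Suc m)) (2 * int a + ht mu m) (2 * int a + ht mu (Suc m))
      (height (c, True))"
    using T region_strip_after_cut[OF _ lv(2)] by simp
  moreover have "Suc (m - 1) = m" using m1 by simp
  then have "ht mu m - 1 \<le> ht mu (m - 1)"
    using ht_Suc_bounds[of mu "m - 1"] by simp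
  ultimately show ?thesis
    using region_strip_before_cut[OF _ lv(1) m1] by (simp add: between_paths_def height_def)
qed

text \<open>A SW half-cell in strip \<open>m-1\<close> whose south-east neighbour leaves the region sits at the
  bottom of the region, where \<open>\<lambda>\<close> touches the diagonal: its height is 1.\<close>
lemma cut_cell_bottom:
  assumes hc: "hc \<in> Reg" and F: "snd hc = False" and lv: "level hc = int m - 1"
    and out: "se_shift hc \<notin> Reg"
  shows "height hc \<le> 1"
proof -
  have m1: "1 \<le> m" using region_strip_before_cut_nonempty[OF hc lv] .
  have "between_paths False 1 0 (2 * int a + ht mu (m - 1)) (2 * int a + ht mu m) (height hc)"
    using hc region_strip_before_cut[OF F lv m1] by simp
  moreover have "\<not> between_paths False 1 0 (2 * int a + ht mu (m - 1)) (2 * int a + ht mu m) (height hc - 2)"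
    using out region_strip_before_cut[of "se_shift hc"] F lv m1 by simp
  ultimately have "height hc < 3" by (auto simp: between_paths_def)
  moreover have "odd (height hc)"
  proof -
    have "fst (fst hc) + snd (fst hc) = int m - 1" using lv F by (simp add: level_def)
    then show ?thesis using m_eq by (simp add: height_def) presburger
  qed
  ultimately show ?thesis by presburger
qed

text \<open>By condition (i),
  \<open>\<eta> + (1,-1)\<close> lies in another tile, which again reaches above the cut and contains
  \<open>hc' + (1,-1)\<close>; descending this way we reach the bottom of the region, where \<open>hc'\<close> has
  the least possible height 1.\<close>
lemma cut_cell_lowest:
  assumes T: "T \<in> tilings Reg" and eta: "eta \<in> T" "eta \<inter> cut_above \<noteq> {}"
    and hc': "hc' \<in> eta" "snd hc' = False" "level hc' = int m - 1"
  shows "\<forall>hc\<in>eta. height hc' \<le> height hc"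
  using eta hc'
proof (induction "nat (height hc')" arbitrary: eta hc' rule: less_induct)
  case less
  have sub: "eta \<subseteq> Reg" using tilings_tile[OF T less.prems(1)] by blast
  have pos: "1 \<le> height hc" if "hc \<in> eta" for hc
    using region_height_pos that sub by blast
  show ?case
  proof (cases "se_shift ` eta \<inter> Reg = {}")
    case True
    then have "se_shift hc' \<notin> Reg" using less.prems(3) by blast
    then have "height hc' \<le> 1"
      using cut_cell_bottom less.prems(3-5) sub by blast
    then show ?thesis using pos by fastforce
  next
    case False
    then obtain eta' where eta': "eta' \<in> T" "se_shift ` eta \<subseteq> eta'"
      using tilings_shift[OF T less.prems(1)] by blast
    obtain z where z: "z \<in> eta" "\<not> level z < int m" using less.prems(2) by blast
    have "se_shift z \<in> eta' \<inter> cut_above" using eta'(2) z by auto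
    then have "eta' \<inter> cut_above \<noteq> {}" by blast
    moreover have "se_shift hc' \<in> eta'" using eta'(2) less.prems(3) by blast
    moreover have "nat (height (se_shift hc')) < nat (height hc')"
      using pos[OF less.prems(3)] by simp
    ultimately have IH: "\<forall>hc\<in>eta'. height (se_shift hc') \<le> height hc"
      using less.hyps[of "se_shift hc'" eta'] eta'(1) less.prems(4,5) by simp
    show ?thesis
    proof
      fix hc assume "hc \<in> eta"
      then have "se_shift hc \<in> eta'" using eta'(2) by blast
      then show "height hc' \<le> height hc" using IH by fastforce
    qed
  qed
qed

lemma crossing_tile_returns_at_cut:
  assumes T: "T \<in> tilings Reg" and eta: "eta \<in> T"
    and lo: "eta \<inter> cut_below \<noteq> {}" and hi: "eta \<inter> cut_above \<noteq> {}"
  obtains c w q where "is_dyck w" "eta = trunc_tile c w" "1 \<le> q" "q < length w"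
    "fst c + snd c + int q = int m - 1" "ht w q = 0"
proof -
  obtain c w where cw: "is_dyck w" "w \<noteq> []" "eta = trunc_tile c w"
    using tilings_tile[OF T eta] unfolding is_ttile_iff by blast
  obtain z1 z2 where z: "z1 \<in> eta" "level z1 < int m" "z2 \<in> eta" "\<not> level z2 < int m"
    using lo hi by blast
  have "fst c + snd c + 1 \<le> level z1" "level z2 \<le> fst c + snd c + int (length w)"
    using level_trunc_tile[of z1 c w] level_trunc_tile[of z2 c w] z cw(3) by auto
  then obtain q where q: "1 \<le> q" "q < length w" "fst c + snd c + int q = int m - 1"
    using z(2,4) by (intro that[of "nat (int m - 1 - (fst c + snd c))"]) linarith+
  let ?cq = "pcell c w q"
  have lv: "level (?cq, False) = int m - 1"
    using level_pcell[of q w c False] q by simp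
  have "(?cq, False) \<in> eta"
    unfolding cw(3) trunc_mem using q by auto
  then have lowest: "\<forall>hc\<in>eta. height (?cq, False) \<le> height hc"
    using cut_cell_lowest[OF T eta hi _ _ lv] by simp
  have "(c, True) \<in> eta"
    using trunc_tile_start[OF cw(2)] cw(3) by simp
  then have "height (?cq, False) \<le> height (c, True)"
    by (rule bspec[OF lowest])
  then have "ht w q = 0"
    using dyck_nonneg[OF cw(1), of q] by (simp add: height_def pcell_diff)
  then show thesis using that cw(1,3) q by blast
qed

text \<open>So a crossing tile splits into two truncated tiles, the lower one ending with the SW
  half and the upper one starting with the NE half of a cell on the cut.\<close>
definition glued :: "halfcell set \<Rightarrow> halfcell set \<Rightarrow> bool" where
  "glued X Y \<longleftrightarrow> (\<exists>c. on_cut c \<and> (c, False) \<in> X \<and> (c, True) \<in> Y)"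

lemma crossing_tile_split:
  assumes T: "T \<in> tilings Reg" and eta: "eta \<in> T"
    and lo: "eta \<inter> cut_below \<noteq> {}" and hi: "eta \<inter> cut_above \<noteq> {}"
  shows "is_ttile (eta \<inter> cut_below) \<and> is_ttile (eta \<inter> cut_above)
    \<and> glued (eta \<inter> cut_below) (eta \<inter> cut_above)"
proof -
  obtain c w q where cw: "is_dyck w" "eta = trunc_tile c w"
    and q: "1 \<le> q" "q < length w" "fst c + snd c + int q = int m - 1" and hq: "ht w q = 0"
    by (rule crossing_tile_returns_at_cut[OF T eta lo hi])
  let ?cq = "pcell c w q"
  have "pcell c (take q w) (length (take q w)) = ?cq"
    using q(2) by (simp add: pcell_def)
  then have split: "eta = trunc_tile c (take q w) \<union> trunc_tile ?cq (drop q w)"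
    using trunc_tile_append[of c "take q w" "drop q w"] cw(2) by simp
  have "trunc_tile c (take q w) \<subseteq> cut_below"
    using level_trunc_tile[of _ c "take q w"] q by fastforce
  moreover have "trunc_tile ?cq (drop q w) \<subseteq> cut_above"
    using level_trunc_tile[of _ ?cq "drop q w"] pcell_sum[of c w q] q by fastforce
  ultimately have parts: "eta \<inter> cut_below = trunc_tile c (take q w)"
    "eta \<inter> cut_above = trunc_tile ?cq (drop q w)"
    unfolding split by blast+
  have "take q w \<noteq> []" "drop q w \<noteq> []"
    using q by auto
  then have "is_ttile (eta \<inter> cut_below)" "is_ttile (eta \<inter> cut_above)"
    unfolding parts is_ttile_iff using dyck_take[OF cw(1) hq] dyck_drop[OF cw(1) hq] by blast+
  moreover have "glued (eta \<inter> cut_below) (eta \<inter> cut_above)"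
    unfolding glued_def on_cut_def parts
  proof (intro exI conjI)
    show "fst ?cq + snd ?cq = int m - 1"
      using pcell_sum[of c w q] q by simp
    show "(?cq, False) \<in> trunc_tile c (take q w)"
      using trunc_tile_end[of "take q w" c] \<open>take q w \<noteq> []\<close> q(2) by (simp add: pcell_def)
    show "(?cq, True) \<in> trunc_tile ?cq (drop q w)"
      using trunc_tile_start[OF \<open>drop q w \<noteq> []\<close>] .
  qed
  ultimately show ?thesis by simp
qed

section \<open>Gluing tiles across the cut\<close>

text \<open>Gluing partners are unique: a tile meets the strips next to the cut in at most one
  half-cell of each orientation.\<close>
lemma glued_partner_unique_upper:
  assumes X: "is_ttile X" and Y: "Y \<inter> Y' = {} \<or> Y = Y'" and g: "glued X Y" "glued X Y'"
  shows "Y = Y'"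
proof -
  obtain c where c: "on_cut c" "(c, False) \<in> X" "(c, True) \<in> Y" using g(1) unfolding glued_def by blast
  obtain c' where c': "on_cut c'" "(c', False) \<in> X" "(c', True) \<in> Y'" using g(2) unfolding glued_def by blast
  have "c = c'"
    using ttile_level_unique[OF X c(2) c'(2)] on_cut_levels[OF c(1)] on_cut_levels[OF c'(1)] by simp
  then show ?thesis using c(3) c'(3) Y by blast
qed

lemma glued_partner_unique_lower:
  assumes Y: "is_ttile Y" and X: "X \<inter> X' = {} \<or> X = X'" and g: "glued X Y" "glued X' Y"
  shows "X = X'"
proof -
  obtain c where c: "on_cut c" "(c, False) \<in> X" "(c, True) \<in> Y" using g(1) unfolding glued_def by blast
  obtain c' where c': "on_cut c'" "(c', False) \<in> X'" "(c', True) \<in> Y" using g(2) unfolding glued_def by blast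
  have "c = c'"
    using ttile_level_unique[OF Y c(3) c'(3)] on_cut_levels[OF c(1)] on_cut_levels[OF c'(1)] by simp
  then show ?thesis using c(2) c'(2) X by blast
qed

lemma glued_pieces_same_tile:
  assumes T: "T \<in> tilings Reg" and eta: "eta \<in> T" "eta' \<in> T"
    and g: "glued (eta \<inter> cut_below) (eta' \<inter> cut_above)"
  shows "eta = eta'"
  using g tilings_halves_same_tile[OF T eta] unfolding glued_def by blast

lemma glued_union_ttile:
  assumes X: "is_ttile X" "X \<subseteq> cut_below" and Y: "is_ttile Y" "Y \<subseteq> cut_above"
    and g: "glued X Y"
  shows "is_ttile (X \<union> Y)"
proof -
  obtain c1 w1 where cw1: "is_dyck w1" "w1 \<noteq> []" "X = trunc_tile c1 w1"
    using X unfolding is_ttile_iff by blast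
  obtain c2 w2 where cw2: "is_dyck w2" "w2 \<noteq> []" "Y = trunc_tile c2 w2"
    using Y unfolding is_ttile_iff by blast
  obtain c where c: "on_cut c" "(c, False) \<in> X" "(c, True) \<in> Y"
    using g unfolding glued_def by blast
  text \<open>The glue cell is the last cell of the lower tile and the first one of the upper tile.\<close>
  have "(pcell c1 w1 (length w1), False) \<in> X"
    using trunc_tile_end[OF cw1(2)] cw1(3) by simp
  then have "level (pcell c1 w1 (length w1), False) < int m"
    using X(2) by blast
  then have "level (pcell c1 w1 (length w1), False) \<le> level (c, False)"
    using on_cut_levels[OF c(1)] by simp
  moreover obtain j where j: "j \<le> length w1" "c = pcell c1 w1 j"
    using c(2) cw1(3) by (auto simp: trunc_mem)
  ultimately have last: "c = pcell c1 w1 (length w1)"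
    using level_pcell[of j w1 c1 False] level_pcell[of "length w1" w1 c1 False] by simp
  have "(c2, True) \<in> Y"
    using trunc_tile_start[OF cw2(2)] cw2(3) by simp
  then have "\<not> level (c2, True) < int m"
    using Y(2) by blast
  then have "level (c, True) \<le> level (c2, True)"
    using on_cut_levels[OF c(1)] by simp
  moreover obtain j' where j': "j' < length w2" "c = pcell c2 w2 j'"
    using c(3) cw2(3) by (auto simp: trunc_mem)
  ultimately have first: "c = c2"
    using level_pcell[of j' w2 c2 True] by (simp add: level_def)
  have "X \<union> Y = trunc_tile c1 (w1 @ w2)"
    using trunc_tile_append[of c1 w1 w2] cw1(3) cw2(3) last first by simp
  then show ?thesis
    unfolding is_ttile_iff using dyck_append[OF cw1(1) cw2(1)] cw1(2) by blast
qed

definition glue :: "halfcell set set \<Rightarrow> halfcell set set \<Rightarrow> halfcell set set" where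
  "glue Q1 Q2 = {z. z \<noteq> {}
     \<and> (z \<inter> cut_below = {} \<or> z \<inter> cut_below \<in> Q1) \<and> (z \<inter> cut_above = {} \<or> z \<inter> cut_above \<in> Q2)
     \<and> (z \<inter> cut_below \<noteq> {} \<longrightarrow> (\<forall>Y\<in>Q2. glued (z \<inter> cut_below) Y \<longleftrightarrow> Y = z \<inter> cut_above))
     \<and> (z \<inter> cut_above \<noteq> {} \<longrightarrow> (\<forall>X\<in>Q1. glued X (z \<inter> cut_above) \<longleftrightarrow> X = z \<inter> cut_below))}"

lemma glueI:
  "z \<noteq> {} \<Longrightarrow> (z \<inter> cut_below = {} \<or> z \<inter> cut_below \<in> Q1) \<Longrightarrow> (z \<inter> cut_above = {} \<or> z \<inter> cut_above \<in> Q2)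
   \<Longrightarrow> (z \<inter> cut_below \<noteq> {} \<Longrightarrow> \<forall>Y\<in>Q2. glued (z \<inter> cut_below) Y \<longleftrightarrow> Y = z \<inter> cut_above)
   \<Longrightarrow> (z \<inter> cut_above \<noteq> {} \<Longrightarrow> \<forall>X\<in>Q1. glued X (z \<inter> cut_above) \<longleftrightarrow> X = z \<inter> cut_below)
   \<Longrightarrow> z \<in> glue Q1 Q2"
  unfolding glue_def mem_Collect_eq by blast

lemma glue_nonempty: "z \<in> glue Q1 Q2 \<Longrightarrow> z \<noteq> {}"
  unfolding glue_def by simp

lemma glue_lower: "z \<in> glue Q1 Q2 \<Longrightarrow> z \<inter> cut_below \<noteq> {} \<Longrightarrow> z \<inter> cut_below \<in> Q1"
  unfolding glue_def by simp

lemma glue_upper: "z \<in> glue Q1 Q2 \<Longrightarrow> z \<inter> cut_above \<noteq> {} \<Longrightarrow> z \<inter> cut_above \<in> Q2"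
  unfolding glue_def by simp

lemma glue_partner_upper:
  "z \<in> glue Q1 Q2 \<Longrightarrow> z \<inter> cut_below \<noteq> {} \<Longrightarrow> Y \<in> Q2 \<Longrightarrow> glued (z \<inter> cut_below) Y \<longleftrightarrow> Y = z \<inter> cut_above"
  unfolding glue_def mem_Collect_eq by (elim conjE) simp

lemma glue_partner_lower:
  "z \<in> glue Q1 Q2 \<Longrightarrow> z \<inter> cut_above \<noteq> {} \<Longrightarrow> X \<in> Q1 \<Longrightarrow> glued X (z \<inter> cut_above) \<longleftrightarrow> X = z \<inter> cut_below"
  unfolding glue_def mem_Collect_eq by (elim conjE) simp

lemma split_at_cut: "z = (z \<inter> cut_below) \<union> (z \<inter> cut_above)"
  by blast

text \<open>Gluing the pieces of a tiling recovers the tiling: a glued tile whose lower piece comes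
  from the tile \<open>e\<close> also has the upper piece of \<open>e\<close>, and symmetrically.\<close>
lemma glue_pieces_upper_part:
  assumes T: "T \<in> tilings Reg" and z: "z \<in> glue (pieces cut_below T) (pieces cut_above T)"
    and e: "e \<in> T" "z \<inter> cut_below = e \<inter> cut_below" and lo: "z \<inter> cut_below \<noteq> {}"
  shows "z \<inter> cut_above = e \<inter> cut_above"
proof (cases "e \<inter> cut_above = {}")
  case False
  have "glued (e \<inter> cut_below) (e \<inter> cut_above)"
    using crossing_tile_split[OF T e(1)] False e(2) lo by simp
  moreover have "e \<inter> cut_above \<in> pieces cut_above T"
    using e(1) False unfolding pieces_mem by blast
  ultimately show ?thesis
    using glue_partner_upper[OF z lo] e(2) by simp
next
  case True
  show ?thesis
  proof (rule ccontr)
    assume ne: "z \<inter> cut_above \<noteq> e \<inter> cut_above"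
    then have up: "z \<inter> cut_above \<in> pieces cut_above T"
      using glue_upper[OF z] True by simp
    then obtain e' where e': "e' \<in> T" "z \<inter> cut_above = e' \<inter> cut_above"
      unfolding pieces_mem by blast
    have "glued (e \<inter> cut_below) (e' \<inter> cut_above)"
      using glue_partner_upper[OF z lo up] e(2) e'(2) by simp
    then have "e = e'" by (rule glued_pieces_same_tile[OF T e(1) e'(1)])
    then show False using ne e'(2) by simp
  qed
qed

lemma glue_pieces_subset:
  assumes T: "T \<in> tilings Reg" and z: "z \<in> glue (pieces cut_below T) (pieces cut_above T)"
  shows "z \<in> T"
proof (cases "z \<inter> cut_below = {}")
  case False
  then obtain e where e: "e \<in> T" "z \<inter> cut_below = e \<inter> cut_below"
    using glue_lower[OF z False] unfolding pieces_mem by blast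
  then have "z = e"
    using glue_pieces_upper_part[OF T z e False] split_at_cut[of z] split_at_cut[of e] by metis
  then show ?thesis using e(1) by simp
next
  case True
  then have up: "z \<inter> cut_above \<noteq> {}"
    using glue_nonempty[OF z] split_at_cut[of z] by auto
  obtain e where e: "e \<in> T" "z \<inter> cut_above = e \<inter> cut_above"
    using glue_upper[OF z up] unfolding pieces_mem by blast
  have "e \<inter> cut_below = {}"
  proof (rule ccontr)
    assume lo: "e \<inter> cut_below \<noteq> {}"
    have "glued (e \<inter> cut_below) (e \<inter> cut_above)"
      using crossing_tile_split[OF T e(1) lo] up e(2) by simp
    moreover have "e \<inter> cut_below \<in> pieces cut_below T"
      using e(1) lo unfolding pieces_mem by blast
    ultimately have "e \<inter> cut_below = z \<inter> cut_below"
      using glue_partner_lower[OF z up] e(2) by simp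
    then show False using lo True by simp
  qed
  then have "z = e" using e(2) True split_at_cut[of z] split_at_cut[of e] by metis
  then show ?thesis using e(1) by simp
qed

lemma tiling_subset_glue_pieces:
  assumes T: "T \<in> tilings Reg" and z: "z \<in> T"
  shows "z \<in> glue (pieces cut_below T) (pieces cut_above T)"
proof (rule glueI)
  show "z \<noteq> {}" using ttile_nonempty tilings_tile[OF T z] by blast
  show "z \<inter> cut_below = {} \<or> z \<inter> cut_below \<in> pieces cut_below T"
    using z unfolding pieces_mem by blast
  show "z \<inter> cut_above = {} \<or> z \<inter> cut_above \<in> pieces cut_above T"
    using z unfolding pieces_mem by blast
next
  assume lo: "z \<inter> cut_below \<noteq> {}"
  show "\<forall>Y\<in>pieces cut_above T. glued (z \<inter> cut_below) Y \<longleftrightarrow> Y = z \<inter> cut_above"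
  proof
    fix Y assume "Y \<in> pieces cut_above T"
    then obtain e where e: "e \<in> T" "Y = e \<inter> cut_above" "e \<inter> cut_above \<noteq> {}"
      unfolding pieces_mem by blast
    show "glued (z \<inter> cut_below) Y \<longleftrightarrow> Y = z \<inter> cut_above"
      using glued_pieces_same_tile[OF T z e(1)] crossing_tile_split[OF T z lo] e(2,3) by blast
  qed
next
  assume up: "z \<inter> cut_above \<noteq> {}"
  show "\<forall>X\<in>pieces cut_below T. glued X (z \<inter> cut_above) \<longleftrightarrow> X = z \<inter> cut_below"
  proof
    fix X assume "X \<in> pieces cut_below T"
    then obtain e where e: "e \<in> T" "X = e \<inter> cut_below" "e \<inter> cut_below \<noteq> {}"
      unfolding pieces_mem by blast
    show "glued X (z \<inter> cut_above) \<longleftrightarrow> X = z \<inter> cut_below"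
      using glued_pieces_same_tile[OF T e(1) z] crossing_tile_split[OF T z _ up] e(2,3) by blast
  qed
qed

lemma glue_pieces:
  assumes T: "T \<in> tilings Reg"
  shows "glue (pieces cut_below T) (pieces cut_above T) = T"
  using glue_pieces_subset[OF T] tiling_subset_glue_pieces[OF T] by blast

lemma glued_shift_from_below:
  assumes g: "glued X Y" and Y: "Y \<subseteq> Reg" and X': "X' \<subseteq> Reg" "se_shift ` X \<subseteq> X'"
  shows "se_shift ` Y \<inter> (Reg \<inter> cut_above) \<noteq> {}" and "se_shift ` Y \<subseteq> Y' \<Longrightarrow> glued X' Y'"
proof -
  obtain c where c: "on_cut c" "(c, False) \<in> X" "(c, True) \<in> Y"
    using g unfolding glued_def by blast
  define c' where "c' = (fst c + 1, snd c - 1)"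
  have sh: "se_shift (c, ne) = (c', ne)" for ne
    by (simp add: transl_pair c'_def)
  have "(c', False) \<in> X'"
    using X'(2) imageI[of "(c, False)" X se_shift] c(2) unfolding sh by blast
  moreover have "lam2 \<noteq> []"
    using region_strip_after_cut_nonempty[of "(c, True)"] c(3) Y on_cut_levels[OF c(1)] by blast
  ultimately have "(c', True) \<in> Reg"
    using on_cut_NE_in_region[OF on_cut_shift[OF c(1)]] X'(1) unfolding c'_def by blast
  moreover have "(c', True) \<in> cut_above"
    using on_cut_levels[OF on_cut_shift[OF c(1)]] unfolding c'_def by simp
  moreover have "(c', True) \<in> se_shift ` Y"
    using imageI[of "(c, True)" Y se_shift] c(3) unfolding sh .
  ultimately show "se_shift ` Y \<inter> (Reg \<inter> cut_above) \<noteq> {}" by blast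
  show "glued X' Y'" if "se_shift ` Y \<subseteq> Y'"
    unfolding glued_def using on_cut_shift[OF c(1)] \<open>(c', False) \<in> X'\<close>
      \<open>(c', True) \<in> se_shift ` Y\<close> that unfolding c'_def by blast
qed

lemma glued_shift_from_above:
  assumes g: "glued X Y" and X: "X \<subseteq> Reg" and Y': "Y' \<subseteq> Reg" "se_shift ` Y \<subseteq> Y'"
  shows "se_shift ` X \<inter> (Reg \<inter> cut_below) \<noteq> {}"
proof -
  obtain c where c: "on_cut c" "(c, False) \<in> X" "(c, True) \<in> Y"
    using g unfolding glued_def by blast
  define c' where "c' = (fst c + 1, snd c - 1)"
  have sh: "se_shift (c, ne) = (c', ne)" for ne
    by (simp add: transl_pair c'_def)
  have "(c', True) \<in> Y'"
    using Y'(2) imageI[of "(c, True)" Y se_shift] c(3) unfolding sh by blast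
  moreover have "1 \<le> m"
    using region_strip_before_cut_nonempty[of "(c, False)"] c(2) X on_cut_levels[OF c(1)] by blast
  ultimately have "(c', False) \<in> Reg"
    using on_cut_SW_in_region[OF on_cut_shift[OF c(1)]] Y'(1) unfolding c'_def by blast
  moreover have "(c', False) \<in> cut_below"
    using on_cut_levels[OF on_cut_shift[OF c(1)]] unfolding c'_def by simp
  moreover have "(c', False) \<in> se_shift ` X"
    using imageI[of "(c, False)" X se_shift] c(2) unfolding sh .
  ultimately show ?thesis by blast
qed

context
  fixes Q1 Q2
  assumes Q1: "Q1 \<in> tilings (Reg \<inter> cut_below)" and Q2: "Q2 \<in> tilings (Reg \<inter> cut_above)"
begin

lemma Q1_tile: "X \<in> Q1 \<Longrightarrow> is_ttile X \<and> X \<subseteq> Reg \<inter> cut_below"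
  using tilings_tile[OF Q1] by blast

lemma Q2_tile: "Y \<in> Q2 \<Longrightarrow> is_ttile Y \<and> Y \<subseteq> Reg \<inter> cut_above"
  using tilings_tile[OF Q2] by blast

lemma glue_pair:
  assumes X: "X \<in> Q1" and Y: "Y \<in> Q2" and g: "glued X Y"
  shows "X \<union> Y \<in> glue Q1 Q2"
proof -
  have lo: "(X \<union> Y) \<inter> cut_below = X" and up: "(X \<union> Y) \<inter> cut_above = Y"
    using Q1_tile[OF X] Q2_tile[OF Y] by blast+
  show ?thesis
  proof (rule glueI)
    show "X \<union> Y \<noteq> {}" using g unfolding glued_def by blast
    show "(X \<union> Y) \<inter> cut_below = {} \<or> (X \<union> Y) \<inter> cut_below \<in> Q1" using lo X by simp
    show "(X \<union> Y) \<inter> cut_above = {} \<or> (X \<union> Y) \<inter> cut_above \<in> Q2" using up Y by simp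
    show "\<forall>Y'\<in>Q2. glued ((X \<union> Y) \<inter> cut_below) Y' \<longleftrightarrow> Y' = (X \<union> Y) \<inter> cut_above"
      unfolding lo up using glued_partner_unique_upper[OF conjunct1[OF Q1_tile[OF X]] _ g]
        tilings_disjoint[OF Q2 Y] g by blast
    show "\<forall>X'\<in>Q1. glued X' ((X \<union> Y) \<inter> cut_above) \<longleftrightarrow> X' = (X \<union> Y) \<inter> cut_below"
      unfolding lo up using glued_partner_unique_lower[OF conjunct1[OF Q2_tile[OF Y]] _ g]
        tilings_disjoint[OF Q1 X] g by blast
  qed
qed

lemma glue_lower_alone:
  assumes X: "X \<in> Q1" and none: "\<forall>Y\<in>Q2. \<not> glued X Y"
  shows "X \<in> glue Q1 Q2"
proof -
  have lo: "X \<inter> cut_below = X" and up: "X \<inter> cut_above = {}"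
    using Q1_tile[OF X] by blast+
  have "Y \<noteq> {}" if "Y \<in> Q2" for Y
    using ttile_nonempty Q2_tile[OF that] by blast
  then show ?thesis
    using X none ttile_nonempty[of X] Q1_tile[OF X] by (intro glueI) (simp_all add: lo up)
qed

lemma glue_upper_alone:
  assumes Y: "Y \<in> Q2" and none: "\<forall>X\<in>Q1. \<not> glued X Y"
  shows "Y \<in> glue Q1 Q2"
proof -
  have lo: "Y \<inter> cut_below = {}" and up: "Y \<inter> cut_above = Y"
    using Q2_tile[OF Y] by blast+
  have "X \<noteq> {}" if "X \<in> Q1" for X
    using ttile_nonempty Q1_tile[OF that] by blast
  then show ?thesis
    using Y none ttile_nonempty[of Y] Q2_tile[OF Y] by (intro glueI) (simp_all add: lo up)
qed

lemma glue_covers_lower: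
  assumes X: "X \<in> Q1"
  shows "\<exists>z\<in>glue Q1 Q2. z \<inter> cut_below = X"
proof (cases "\<exists>Y\<in>Q2. glued X Y")
  case True
  then obtain Y where Y: "Y \<in> Q2" "glued X Y" by blast
  have "(X \<union> Y) \<inter> cut_below = X"
    using Q1_tile[OF X] Q2_tile[OF Y(1)] by blast
  then show ?thesis using glue_pair[OF X Y] by blast
next
  case False
  have "X \<inter> cut_below = X" using Q1_tile[OF X] by blast
  then show ?thesis using glue_lower_alone[OF X] False by blast
qed

lemma glue_covers_upper:
  assumes Y: "Y \<in> Q2"
  shows "\<exists>z\<in>glue Q1 Q2. z \<inter> cut_above = Y"
proof (cases "\<exists>X\<in>Q1. glued X Y")
  case True
  then obtain X where X: "X \<in> Q1" "glued X Y" by blast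
  have "(X \<union> Y) \<inter> cut_above = Y"
    using Q1_tile[OF X(1)] Q2_tile[OF Y] by blast
  then show ?thesis using glue_pair[OF X(1) Y X(2)] by blast
next
  case False
  have "Y \<inter> cut_above = Y" using Q2_tile[OF Y] by blast
  then show ?thesis using glue_upper_alone[OF Y] False by blast
qed

lemma pieces_glue_lower: "pieces cut_below (glue Q1 Q2) = Q1"
proof (rule set_eqI iffI)+
  fix P assume "P \<in> pieces cut_below (glue Q1 Q2)"
  then show "P \<in> Q1" unfolding pieces_mem using glue_lower by blast
next
  fix P assume P: "P \<in> Q1"
  then have "P \<noteq> {}" using ttile_nonempty Q1_tile by blast
  then show "P \<in> pieces cut_below (glue Q1 Q2)"
    using glue_covers_lower[OF P] unfolding pieces_mem by metis
qed

lemma pieces_glue_upper: "pieces cut_above (glue Q1 Q2) = Q2"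
proof (rule set_eqI iffI)+
  fix P assume "P \<in> pieces cut_above (glue Q1 Q2)"
  then show "P \<in> Q2" unfolding pieces_mem using glue_upper by blast
next
  fix P assume P: "P \<in> Q2"
  then have "P \<noteq> {}" using ttile_nonempty Q2_tile by blast
  then show "P \<in> pieces cut_above (glue Q1 Q2)"
    using glue_covers_upper[OF P] unfolding pieces_mem by metis
qed

lemma glue_eq_by_lower:
  assumes z: "z \<in> glue Q1 Q2" "z' \<in> glue Q1 Q2"
    and e: "z \<inter> cut_below = z' \<inter> cut_below" "z \<inter> cut_below \<noteq> {}"
  shows "z = z'"
proof -
  have e': "z' \<inter> cut_below \<noteq> {}" using e by simp
  have "z \<inter> cut_above = z' \<inter> cut_above"
  proof (cases "z \<inter> cut_above = {}")
    case False
    then have up: "z \<inter> cut_above \<in> Q2" by (rule glue_upper[OF z(1)])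
    then have "glued (z \<inter> cut_below) (z \<inter> cut_above)"
      using glue_partner_upper[OF z(1) e(2)] by simp
    then show ?thesis using glue_partner_upper[OF z(2) e' up] e(1) by simp
  next
    case True
    show ?thesis
    proof (rule ccontr)
      assume ne: "z \<inter> cut_above \<noteq> z' \<inter> cut_above"
      then have up: "z' \<inter> cut_above \<in> Q2" using glue_upper[OF z(2)] True by simp
      then have "glued (z' \<inter> cut_below) (z' \<inter> cut_above)"
        using glue_partner_upper[OF z(2) e'] by simp
      then have "z' \<inter> cut_above = z \<inter> cut_above"
        using glue_partner_upper[OF z(1) e(2) up] e(1) by simp
      then show False using ne by simp
    qed
  qed
  then show ?thesis using e(1) split_at_cut[of z] split_at_cut[of z'] by metis
qed

lemma glue_eq_by_upper:
  assumes z: "z \<in> glue Q1 Q2" "z' \<in> glue Q1 Q2"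
    and e: "z \<inter> cut_above = z' \<inter> cut_above" "z \<inter> cut_above \<noteq> {}"
  shows "z = z'"
proof -
  have e': "z' \<inter> cut_above \<noteq> {}" using e by simp
  have "z \<inter> cut_below = z' \<inter> cut_below"
  proof (cases "z \<inter> cut_below = {}")
    case False
    then have lo: "z \<inter> cut_below \<in> Q1" by (rule glue_lower[OF z(1)])
    then have "glued (z \<inter> cut_below) (z \<inter> cut_above)"
      using glue_partner_lower[OF z(1) e(2)] by simp
    then show ?thesis using glue_partner_lower[OF z(2) e' lo] e(1) by simp
  next
    case True
    show ?thesis
    proof (rule ccontr)
      assume ne: "z \<inter> cut_below \<noteq> z' \<inter> cut_below"
      then have lo: "z' \<inter> cut_below \<in> Q1" using glue_lower[OF z(2)] True by simp
      then have "glued (z' \<inter> cut_below) (z' \<inter> cut_above)"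
        using glue_partner_lower[OF z(2) e'] by simp
      then have "z' \<inter> cut_below = z \<inter> cut_below"
        using glue_partner_lower[OF z(1) e(2) lo] e(1) by simp
      then show False using ne by simp
    qed
  qed
  then show ?thesis using e(1) split_at_cut[of z] split_at_cut[of z'] by metis
qed

lemma glue_disjoint:
  assumes z: "z \<in> glue Q1 Q2" "z' \<in> glue Q1 Q2" "z \<noteq> z'"
  shows "z \<inter> z' = {}"
proof -
  have "(z \<inter> cut_below) \<inter> (z' \<inter> cut_below) = {}"
  proof (cases "z \<inter> cut_below = {} \<or> z' \<inter> cut_below = {}")
    case False
    then have "z \<inter> cut_below \<noteq> z' \<inter> cut_below" using glue_eq_by_lower[OF z(1,2)] z(3) by blast
    then show ?thesis using tilings_disjoint[OF Q1] glue_lower z False by blast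
  qed blast
  moreover have "(z \<inter> cut_above) \<inter> (z' \<inter> cut_above) = {}"
  proof (cases "z \<inter> cut_above = {} \<or> z' \<inter> cut_above = {}")
    case False
    then have "z \<inter> cut_above \<noteq> z' \<inter> cut_above" using glue_eq_by_upper[OF z(1,2)] z(3) by blast
    then show ?thesis using tilings_disjoint[OF Q2] glue_upper z False by blast
  qed blast
  ultimately show ?thesis by blast
qed

lemma glue_tile:
  assumes z: "z \<in> glue Q1 Q2"
  shows "is_ttile z \<and> z \<subseteq> Reg"
proof (cases "z \<inter> cut_below = {}")
  case True
  then have "z = z \<inter> cut_above" by blast
  moreover have "z \<inter> cut_above \<in> Q2"
    using glue_upper[OF z] glue_nonempty[OF z] True by blast
  ultimately show ?thesis using Q2_tile by (metis le_infE)
next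
  case False
  then have lo: "z \<inter> cut_below \<in> Q1" by (rule glue_lower[OF z])
  show ?thesis
  proof (cases "z \<inter> cut_above = {}")
    case True
    then have "z = z \<inter> cut_below" by blast
    then show ?thesis using Q1_tile[OF lo] by (metis le_infE)
  next
    case up: False
    then have up: "z \<inter> cut_above \<in> Q2" by (rule glue_upper[OF z])
    have "glued (z \<inter> cut_below) (z \<inter> cut_above)"
      using glue_partner_upper[OF z False up] by simp
    then have "is_ttile ((z \<inter> cut_below) \<union> (z \<inter> cut_above))"
      using glued_union_ttile Q1_tile[OF lo] Q2_tile[OF up] by blast
    moreover have "z \<subseteq> Reg"
      using Q1_tile[OF lo] Q2_tile[OF up] split_at_cut[of z] by blast
    ultimately show ?thesis using split_at_cut[of z] by metis
  qed
qed

text \<open>Condition (i) for the glued tiling, first case: the shifted lower part \<open>A\<close> of a glued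
  tile stays in the region.  Then the tile of \<open>Q\<^sub>1\<close> covering the shift of \<open>A\<close> is glued to the
  tile of \<open>Q\<^sub>2\<close> covering the shift of the upper part, so one glued tile covers both.\<close>
lemma glue_shift_upper_follows:
  assumes z: "z \<in> glue Q1 Q2" and lo: "z \<inter> cut_below \<noteq> {}"
    and X': "X' \<in> Q1" "se_shift ` (z \<inter> cut_below) \<subseteq> X'"
    and z': "z' \<in> glue Q1 Q2" "z' \<inter> cut_below = X'"
  shows "se_shift ` (z \<inter> cut_above) \<subseteq> z'"
proof (cases "z \<inter> cut_above = {}")
  case False
  then have up: "z \<inter> cut_above \<in> Q2" by (rule glue_upper[OF z])
  have g: "glued (z \<inter> cut_below) (z \<inter> cut_above)"
    using glue_partner_upper[OF z lo up] by simp
  have subs: "z \<inter> cut_above \<subseteq> Reg" "X' \<subseteq> Reg"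
    using Q2_tile[OF up] Q1_tile[OF X'(1)] by auto
  obtain Y' where Y': "Y' \<in> Q2" "se_shift ` (z \<inter> cut_above) \<subseteq> Y'"
    using tilings_shift[OF Q2 up glued_shift_from_below(1)[OF g subs X'(2)]] by blast
  have "X' \<noteq> {}" using ttile_nonempty Q1_tile[OF X'(1)] by blast
  then have "Y' = z' \<inter> cut_above"
    using glue_partner_upper[OF z'(1) _ Y'(1)] z'(2) glued_shift_from_below(2)[OF g subs X'(2) Y'(2)]
    by simp
  then have "Y' \<subseteq> z'" by simp
  with Y'(2) show ?thesis by (rule order_trans)
qed simp

lemma glue_shift_via_lower:
  assumes z: "z \<in> glue Q1 Q2" and meets: "se_shift ` (z \<inter> cut_below) \<inter> (Reg \<inter> cut_below) \<noteq> {}"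
  shows "\<exists>z'\<in>glue Q1 Q2. z' \<noteq> z \<and> se_shift ` z \<subseteq> z'"
proof -
  let ?A = "z \<inter> cut_below"
  have "?A \<noteq> {}" using meets by (metis Int_empty_left image_empty)
  then have A: "?A \<in> Q1" by (rule glue_lower[OF z])
  obtain X' where X': "X' \<in> Q1" "X' \<noteq> ?A" "se_shift ` ?A \<subseteq> X'"
    using tilings_shift[OF Q1 A meets] by blast
  obtain z' where z': "z' \<in> glue Q1 Q2" "z' \<inter> cut_below = X'"
    using glue_covers_lower[OF X'(1)] by blast
  have "se_shift ` ?A \<subseteq> z'"
    using X'(3) z'(2) by (metis Int_lower1 order_trans)
  moreover have "se_shift ` (z \<inter> cut_above) \<subseteq> z'"
    by (rule glue_shift_upper_follows[OF z \<open>?A \<noteq> {}\<close> X'(1,3) z'])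
  ultimately have "se_shift ` z \<subseteq> z'"
    using split_at_cut[of z] by (metis image_Un le_sup_iff)
  moreover have "z' \<noteq> z" using z'(2) X'(2) by blast
  ultimately show ?thesis using z'(1) by blast
qed

text \<open>Second case: the shifted lower part leaves the region.  Then the tile has no lower
  part at all (otherwise the shift of its glue cell would stay in the region), and the glued
  tile over the tile of \<open>Q\<^sub>2\<close> covering the shifted upper part serves.\<close>
lemma glue_shift_via_upper:
  assumes z: "z \<in> glue Q1 Q2" and meets: "se_shift ` z \<inter> Reg \<noteq> {}"
    and leaves: "se_shift ` (z \<inter> cut_below) \<inter> (Reg \<inter> cut_below) = {}"
  shows "\<exists>z'\<in>glue Q1 Q2. z' \<noteq> z \<and> se_shift ` z \<subseteq> z'"
proof -
  let ?A = "z \<inter> cut_below" and ?B = "z \<inter> cut_above"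
  have sh_split: "se_shift ` z = se_shift ` ?A \<union> se_shift ` ?B"
    using split_at_cut[of z] by (metis image_Un)
  have meets_B: "se_shift ` ?B \<inter> (Reg \<inter> cut_above) \<noteq> {}"
  proof
    assume "se_shift ` ?B \<inter> (Reg \<inter> cut_above) = {}"
    moreover have "se_shift ` ?A \<subseteq> cut_below" "se_shift ` ?B \<subseteq> cut_above" by auto
    ultimately have "(se_shift ` ?A \<union> se_shift ` ?B) \<inter> Reg = {}"
      using leaves by blast
    then show False using meets unfolding sh_split by simp
  qed
  then have "?B \<noteq> {}" by (metis Int_empty_left image_empty)
  then have B: "?B \<in> Q2" by (rule glue_upper[OF z])
  obtain Y' where Y': "Y' \<in> Q2" "Y' \<noteq> ?B" "se_shift ` ?B \<subseteq> Y'"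
    using tilings_shift[OF Q2 B meets_B] by blast
  have "?A = {}"
  proof (rule ccontr)
    assume "?A \<noteq> {}"
    then have A: "?A \<in> Q1" by (rule glue_lower[OF z])
    have "glued ?A ?B" using glue_partner_upper[OF z \<open>?A \<noteq> {}\<close> B] by simp
    then have "se_shift ` ?A \<inter> (Reg \<inter> cut_below) \<noteq> {}"
      using Q1_tile[OF A] Q2_tile[OF Y'(1)]
      by (intro glued_shift_from_above[OF _ _ _ Y'(3)]) auto
    then show False using leaves by simp
  qed
  obtain z' where z': "z' \<in> glue Q1 Q2" "z' \<inter> cut_above = Y'"
    using glue_covers_upper[OF Y'(1)] by blast
  have "se_shift ` z \<subseteq> Y'" using Y'(3) \<open>?A = {}\<close> unfolding sh_split by simp
  then have "se_shift ` z \<subseteq> z'" using z'(2) by (metis Int_lower1 order_trans)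
  moreover have "z' \<noteq> z" using z'(2) Y'(2) by blast
  ultimately show ?thesis using z'(1) by blast
qed

lemma glue_shift:
  assumes "z \<in> glue Q1 Q2" "se_shift ` z \<inter> Reg \<noteq> {}"
  shows "\<exists>z'\<in>glue Q1 Q2. z' \<noteq> z \<and> se_shift ` z \<subseteq> z'"
  using glue_shift_via_lower[OF assms(1)] glue_shift_via_upper[OF assms] by blast

text \<open>A cell on the cut is never split between two glued tiles: its two halves would glue
  the lower part of the one to the upper part of the other.\<close>
lemma glue_cut_cell_not_split:
  assumes w: "w \<in> glue Q1 Q2" "w' \<in> glue Q1 Q2" and c: "on_cut c"
    and halves: "(c, False) \<in> w" "(c, True) \<in> w'"
  shows "(c, True) \<in> w"
proof -
  have sides: "(c, False) \<in> cut_below" "(c, True) \<in> cut_above"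
    using on_cut_levels[OF c] by simp_all
  then have lo: "w \<inter> cut_below \<noteq> {}" and up: "w' \<inter> cut_above \<noteq> {}"
    using halves by blast+
  have "glued (w \<inter> cut_below) (w' \<inter> cut_above)"
    unfolding glued_def using c halves sides by blast
  then have "w' \<inter> cut_above = w \<inter> cut_above"
    using glue_partner_upper[OF w(1) lo glue_upper[OF w(2) up]] by simp
  then show ?thesis using halves(2) sides(2) by blast
qed

text \<open>Off the cut, a diagonal border shared by two
  glued tiles is shared by their parts on that side, which are distinct tiles of \<open>Q\<^sub>1\<close> or
  \<open>Q\<^sub>2\<close>; on the cut, it would split a cell.\<close>
lemma glue_border:
  assumes z: "z \<in> glue Q1 Q2" "z' \<in> glue Q1 Q2" "z \<noteq> z'"
    and c: "diag_border z c" "diag_border z' c"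
  shows False
proof -
  have dis: "z \<inter> z' = {}" by (rule glue_disjoint[OF z])
  consider (lo) "fst c + snd c + 1 < int m" | (hi) "\<not> fst c + snd c < int m" | (cut) "on_cut c"
    unfolding on_cut_def by linarith
  then show False
  proof cases
    case lo
    then have "(c, False) \<in> cut_below" "(c, True) \<in> cut_below" by (simp_all add: level_def)
    then have d: "diag_border (z \<inter> cut_below) c" "diag_border (z' \<inter> cut_below) c"
      using c unfolding diag_border_def by blast+
    then have ne: "z \<inter> cut_below \<noteq> {}" "z' \<inter> cut_below \<noteq> {}"
      unfolding diag_border_def by blast+
    have "z \<inter> cut_below \<noteq> z' \<inter> cut_below" using glue_eq_by_lower[OF z(1,2)] ne z(3) by blast
    then show False
      using tilings_border[OF Q1 glue_lower[OF z(1) ne(1)] glue_lower[OF z(2) ne(2)] _ d] by blast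
  next
    case hi
    then have "(c, False) \<in> cut_above" "(c, True) \<in> cut_above" by (simp_all add: level_def)
    then have d: "diag_border (z \<inter> cut_above) c" "diag_border (z' \<inter> cut_above) c"
      using c unfolding diag_border_def by blast+
    then have ne: "z \<inter> cut_above \<noteq> {}" "z' \<inter> cut_above \<noteq> {}"
      unfolding diag_border_def by blast+
    have "z \<inter> cut_above \<noteq> z' \<inter> cut_above" using glue_eq_by_upper[OF z(1,2)] ne z(3) by blast
    then show False
      using tilings_border[OF Q2 glue_upper[OF z(1) ne(1)] glue_upper[OF z(2) ne(2)] _ d] by blast
  next
    case cut
    show False
    proof (cases "(c, False) \<in> z")
      case True
      then have "(c, True) \<in> z'" using c dis unfolding diag_border_def by blast
      then show False using glue_cut_cell_not_split[OF z(1,2) cut True] True c(1)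
        unfolding diag_border_def by blast
    next
      case False
      then have "(c, True) \<in> z" "(c, False) \<in> z'" using c dis unfolding diag_border_def by blast+
      then show False using glue_cut_cell_not_split[OF z(2,1) cut] dis by blast
    qed
  qed
qed

lemma glue_tiling: "glue Q1 Q2 \<in> tilings Reg"
  by (rule tilingsI[OF glue_tile glue_disjoint glue_shift glue_border])

end

section \<open>The bijection\<close>

lemma TD_lam2_iff: "Q \<in> TD lam2 i mu2 \<longleftrightarrow> transl_tiling (int n1) Q \<in> tilings (Reg \<inter> cut_above)"
proof
  assume "Q \<in> TD lam2 i mu2"
  then show "transl_tiling (int n1) Q \<in> tilings (Reg \<inter> cut_above)"
    unfolding TD_eq_tilings region_above transl_tiling_def by (rule tilings_transl)
next
  assume "transl_tiling (int n1) Q \<in> tilings (Reg \<inter> cut_above)"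
  then have "transl_tiling (- int n1) (transl_tiling (int n1) Q)
      \<in> tilings (diag_transl (- int n1) ` (Reg \<inter> cut_above))"
    unfolding transl_tiling_def[of "- int n1"] by (rule tilings_transl)
  moreover have "diag_transl (- int n1) ` (Reg \<inter> cut_above) = region lam2 i mu2"
    unfolding region_above image_image by simp
  ultimately show "Q \<in> TD lam2 i mu2"
    by (simp add: TD_eq_tilings)
qed

lemma TD_lam1_iff: "Q \<in> TD lam1 a mu1 \<longleftrightarrow> Q \<in> tilings (Reg \<inter> cut_below)"
  by (simp add: TD_eq_tilings region_below)

text \<open>By the crossing lemma, the parts of a tile on either side of the cut are tiles again,
  so the pieces of a tiling form tilings of the two parts of the region.\<close>
lemma tile_parts_ttile:
  assumes T: "T \<in> tilings Reg" and e: "e \<in> T"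
  shows "e \<inter> cut_below \<noteq> {} \<Longrightarrow> is_ttile (e \<inter> cut_below)"
    and "e \<inter> cut_above \<noteq> {} \<Longrightarrow> is_ttile (e \<inter> cut_above)"
proof -
  have tile: "is_ttile e" using tilings_tile[OF T e] by blast
  show "is_ttile (e \<inter> cut_below)" if lo: "e \<inter> cut_below \<noteq> {}"
  proof (cases "e \<inter> cut_above = {}")
    case True
    then have "e \<inter> cut_below = e" by blast
    then show ?thesis using tile by simp
  qed (use crossing_tile_split[OF T e lo] in blast)
  show "is_ttile (e \<inter> cut_above)" if up: "e \<inter> cut_above \<noteq> {}"
  proof (cases "e \<inter> cut_below = {}")
    case True
    then have "e \<inter> cut_above = e" by blast
    then show ?thesis using tile by simp
  qed (use crossing_tile_split[OF T e _ up] in blast)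
qed

lemma pieces_tilings:
  assumes T: "T \<in> tilings Reg"
  shows "pieces cut_below T \<in> tilings (Reg \<inter> cut_below)"
    and "pieces cut_above T \<in> tilings (Reg \<inter> cut_above)"
  by (rule pieces_tiling[OF T _ tile_parts_ttile(1)[OF T]]; force)
    (rule pieces_tiling[OF T _ tile_parts_ttile(2)[OF T]]; force)

definition split_tiling :: "halfcell set set \<Rightarrow> halfcell set set \<times> halfcell set set" where
  "split_tiling T = (pieces cut_below T, transl_tiling (- int n1) (pieces cut_above T))"

definition join_tilings :: "halfcell set set \<times> halfcell set set \<Rightarrow> halfcell set set" where
  "join_tilings p = glue (fst p) (transl_tiling (int n1) (snd p))"

lemma split_tiling_bij: "bij_betw split_tiling (TD lam a mu) (TD lam1 a mu1 \<times> TD lam2 i mu2)"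
proof (rule bij_betw_byWitness[where f' = join_tilings])
  show "\<forall>T\<in>TD lam a mu. join_tilings (split_tiling T) = T"
    unfolding TD_eq_tilings join_tilings_def split_tiling_def by (simp add: glue_pieces)
  show "\<forall>p\<in>TD lam1 a mu1 \<times> TD lam2 i mu2. split_tiling (join_tilings p) = p"
  proof
    fix p assume "p \<in> TD lam1 a mu1 \<times> TD lam2 i mu2"
    then have Q1: "fst p \<in> tilings (Reg \<inter> cut_below)"
      and Q2: "transl_tiling (int n1) (snd p) \<in> tilings (Reg \<inter> cut_above)"
      by (auto simp: mem_Times_iff TD_lam1_iff TD_lam2_iff)
    show "split_tiling (join_tilings p) = p"
      unfolding split_tiling_def join_tilings_def
      by (simp add: pieces_glue_lower[OF Q1 Q2] pieces_glue_upper[OF Q1 Q2])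
  qed
  show "split_tiling ` TD lam a mu \<subseteq> TD lam1 a mu1 \<times> TD lam2 i mu2"
    using pieces_tilings by (auto simp: TD_eq_tilings[of lam] split_tiling_def TD_lam1_iff TD_lam2_iff)
  show "join_tilings ` (TD lam1 a mu1 \<times> TD lam2 i mu2) \<subseteq> TD lam a mu"
    using glue_tiling by (auto simp: TD_eq_tilings[of lam] join_tilings_def TD_lam1_iff TD_lam2_iff)
qed

text \<open>The norm is additive: \<open>4\<parallel>T\<parallel>\<close> counts the half-cells covered by \<open>T\<close>, and the
  half-cells covered below and above the cut are counted by the two pieces.\<close>
lemma split_tiling_norm:
  assumes T: "T \<in> TD lam a mu"
  shows "tnorm T = tnorm (fst (split_tiling T)) + tnorm (snd (split_tiling T))"
proof -
  have T': "T \<in> tilings Reg" using T by (simp add: TD_eq_tilings)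
  have "\<Union>T \<subseteq> Reg"
    using tilings_tile[OF T'] by blast
  then have fin: "finite (\<Union>T)"
    using region_finite by (rule finite_subset)
  have "card (\<Union>T) = card ((\<Union>T \<inter> cut_below) \<union> (\<Union>T \<inter> cut_above))"
    by (rule arg_cong[where f = card]) blast
  also have "\<dots> = card (\<Union>T \<inter> cut_below) + card (\<Union>T \<inter> cut_above)"
    by (rule card_Un_disjoint) (use fin in auto)
  finally have "card (\<Union>T) = card (\<Union>T \<inter> cut_below) + card (\<Union>T \<inter> cut_above)" .
  moreover have "4 * tnorm T = card (\<Union>T)"
    by (rule tnorm_card[OF T'])
  moreover have "4 * tnorm (fst (split_tiling T)) = card (\<Union>T \<inter> cut_below)"
    unfolding split_tiling_def fst_conv tnorm_card[OF pieces_tilings(1)[OF T']] Union_pieces ..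
  moreover have "4 * tnorm (snd (split_tiling T)) = card (\<Union>T \<inter> cut_above)"
  proof -
    have "snd (split_tiling T) \<in> TD lam2 i mu2"
      unfolding split_tiling_def snd_conv TD_lam2_iff transl_tiling_inverse'
      by (rule pieces_tilings(2)[OF T'])
    then have "4 * tnorm (snd (split_tiling T)) = card (\<Union>(snd (split_tiling T)))"
      unfolding TD_eq_tilings by (rule tnorm_card)
    also have "\<dots> = card (diag_transl (- int n1) ` (\<Union>T \<inter> cut_above))"
      unfolding split_tiling_def snd_conv Union_transl_tiling Union_pieces ..
    also have "\<dots> = card (\<Union>T \<inter> cut_above)"
      by (rule card_image) (rule inj_on_subset[OF inj_transl], simp)
    finally show ?thesis .
  qed
  ultimately show ?thesis by simp
qed

end

theorem lemma3p6:
  fixes lam1 lam2 mu1 mu2 :: "bool list" and n1 n2 a b i :: nat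
  assumes "lam1 \<in> Dyck (2 * n1)" and "lam2 \<in> Dyck (2 * n2)"
    and "mu1 \<in> Lpaths lam1 a i" and "mu2 \<in> Lpaths lam2 i b"
  shows "\<exists>\<phi>. bij_betw \<phi> (TD (lam1 @ lam2) a (mu1 @ mu2)) (TD lam1 a mu1 \<times> TD lam2 i mu2)
           \<and> (\<forall>T\<in>TD (lam1 @ lam2) a (mu1 @ mu2).
                 tnorm T = tnorm (fst (\<phi> T)) + tnorm (snd (\<phi> T)))"
proof -
  interpret concat_setup lam1 lam2 mu1 mu2 n1 n2 a b i
    using assms by unfold_locales
  show ?thesis
    using split_tiling_bij split_tiling_norm by blast
qed

end
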